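(* Let $\Delta t_{\mathrm{CFL,gen}}$ be the generalized CFL limit of the whole region and, for each $1\le i\le n_x$, $1\le j\le n_y$, $1\le k\le n_z$, let $\Delta t^{(i,j,k)}_{\mathrm{CFL,gen}}$ be the generalized CFL limit of the single-cell region ($n_x=n_y=n_z=1$) formed by the primary cell with corners $(i,j,k)$ and $(i+1,j+1,k+1)$, with the same $\hbar,m,\Delta x,\Delta y,\Delta z$ and with potential $U_{i+a,j+b,k+c}$ ($a,b,c\in\{0,1\}$) at its local node $(a+1,b+1,c+1)$. Then $$\min_{i,j,k}\Delta t^{(i,j,k)}_{\mathrm{CFL,gen}}\le\Delta t_{\mathrm{CFL,gen}}.$$
   Context: Fix constants $\hbar>0$, $m>0$, cell sizes $\Delta x,\Delta y,\Delta z>0$ and positive integers $n_x,n_y,n_z$. A region is a box of $n_x\times n_y\times n_z$ primary cells of size $\Delta x\times\Delta y\times\Delta z$ with primary nodes $(i,j,k)$, $1\le i\le n_x+1$, $1\le j\le n_y+1$, $1\le k\le n_z+1$. Let $N=(n_x+1)(n_y+1)(n_z+1)$; node-indexed vectors use the ordering $i+(j-1)(n_x+1)+(k-1)(n_x+1)(n_y+1)$. Real potential values $U_{i,j,k}$ are given at the nodes; $D_U$ is the $N\times N$ diagonal matrix containing them. Let $I_p$ be the $p\times p$ identity, $\tilde I_p=\mathrm{diag}(\tfrac12,1,\dots,1,\tfrac12)$ ($p\times p$; $\tilde I_2=\tfrac12I_2$), $W_p=[0_{p\times1}\ I_p]-[I_p\ 0_{p\times 1}]$ ($p\times(p+1)$),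 $\otimes$ the Kronecker product. For a region define $D_V''=\Delta x\Delta y\Delta z\,\tilde I_{n_z+1}\otimes\tilde I_{n_y+1}\otimes\tilde I_{n_x+1}$; $D=[D_x\ D_y\ D_z]$ with $D_x=-I_{n_z+1}\otimes I_{n_y+1}\otimes W_{n_x}^T$, $D_y=-I_{n_z+1}\otimes W_{n_y}^T\otimes I_{n_x+1}$, $D_z=-W_{n_z}^T\otimes I_{n_y+1}\otimes I_{n_x+1}$; $D_S''=\mathrm{diag}(\Delta y\Delta z\,\tilde I_{n_z+1}\otimes\tilde I_{n_y+1}\otimes I_{n_x},\ \Delta x\Delta z\,\tilde I_{n_z+1}\otimes I_{n_y}\otimes\tilde I_{n_x+1},\ \Delta x\Delta y\,I_{n_z}\otimes\tilde I_{n_y+1}\otimes\tilde I_{n_x+1})$; $D_l'=\mathrm{diag}(\Delta x\, I_{n_x(n_y+1)(n_z+1)},\ \Delta y\, I_{(n_x+1)n_y(n_z+1)},\ \Delta z\, I_{(n_x+1)(n_y+1)n_z})$; $H=\frac{\hbar^2}{2m}D D_S''(D_l')^{-1}D^T+D_V''D_U$. The generalized CFL limit of a region is $\Delta t_{\mathrm{CFL,gen}}=2/\rho\!\left(\frac{1}{\hbar}(D_V'')^{-1/2}H(D_V'')^{-1/2}\right)$, with $\rho$ the spectral radius. *)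

theory Defs
  imports "Jordan_Normal_Form.Spectral_Radius"
begin

definition kron :: "real mat \<Rightarrow> real mat \<Rightarrow> real mat" where
  "kron A B = mat (dim_row A * dim_row B) (dim_col A * dim_col B)
     (\<lambda>(i,j). A $$ (i div dim_row B, j div dim_col B) * B $$ (i mod dim_row B, j mod dim_col B))"

definition Itil :: "nat \<Rightarrow> real mat" where
  "Itil p = mat p p (\<lambda>(i,j). if i = j then (if i = 0 \<or> i = p - 1 then 1/2 else 1) else 0)"

definition Wm :: "nat \<Rightarrow> real mat" where
  "Wm p = mat p (p+1) (\<lambda>(i,j). (if j = i + 1 then 1 else 0) - (if j = i then 1 else 0))"

definition hcat3 :: "real mat \<Rightarrow> real mat \<Rightarrow> real mat \<Rightarrow> real mat" where
  "hcat3 A B C = mat (dim_row A) (dim_col A + dim_col B + dim_col C)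
     (\<lambda>(i,j). if j < dim_col A then A $$ (i,j)
             else if j < dim_col A + dim_col B then B $$ (i, j - dim_col A)
             else C $$ (i, j - dim_col A - dim_col B))"

definition bdiag3 :: "real mat \<Rightarrow> real mat \<Rightarrow> real mat \<Rightarrow> real mat" where
  "bdiag3 A B C = (let a = dim_row A; b = dim_row B; c = dim_row C in
     mat (a+b+c) (a+b+c)
     (\<lambda>(i,j). if i < a \<and> j < a then A $$ (i,j)
             else if a \<le> i \<and> i < a+b \<and> a \<le> j \<and> j < a+b then B $$ (i-a, j-a)
             else if a+b \<le> i \<and> a+b \<le> j then C $$ (i-a-b, j-a-b)
             else 0))"

definition diag_inv_sqrt :: "real mat \<Rightarrow> real mat" where
  "diag_inv_sqrt A = mat (dim_row A) (dim_row A)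
     (\<lambda>(i,j). if i = j then 1 / sqrt (A $$ (i,i)) else 0)"

definition DV :: "real \<Rightarrow> real \<Rightarrow> real \<Rightarrow> nat \<Rightarrow> nat \<Rightarrow> nat \<Rightarrow> real mat" where
  "DV dx dy dz nx ny nz =
     (dx*dy*dz) \<cdot>\<^sub>m kron (Itil (nz+1)) (kron (Itil (ny+1)) (Itil (nx+1)))"

definition Dmat :: "nat \<Rightarrow> nat \<Rightarrow> nat \<Rightarrow> real mat" where
  "Dmat nx ny nz = hcat3
     (- kron (1\<^sub>m (nz+1)) (kron (1\<^sub>m (ny+1)) (transpose_mat (Wm nx))))
     (- kron (1\<^sub>m (nz+1)) (kron (transpose_mat (Wm ny)) (1\<^sub>m (nx+1))))
     (- kron (transpose_mat (Wm nz)) (kron (1\<^sub>m (ny+1)) (1\<^sub>m (nx+1))))"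

definition DS :: "real \<Rightarrow> real \<Rightarrow> real \<Rightarrow> nat \<Rightarrow> nat \<Rightarrow> nat \<Rightarrow> real mat" where
  "DS dx dy dz nx ny nz = bdiag3
     ((dy*dz) \<cdot>\<^sub>m kron (Itil (nz+1)) (kron (Itil (ny+1)) (1\<^sub>m nx)))
     ((dx*dz) \<cdot>\<^sub>m kron (Itil (nz+1)) (kron (1\<^sub>m ny) (Itil (nx+1))))
     ((dx*dy) \<cdot>\<^sub>m kron (1\<^sub>m nz) (kron (Itil (ny+1)) (Itil (nx+1))))"

(* (D_l')^{-1}, the inverse of the diagonal matrix
   D_l' = diag(dx I, dy I, dz I), written out explicitly *)
definition Dl_inv :: "real \<Rightarrow> real \<Rightarrow> real \<Rightarrow> nat \<Rightarrow> nat \<Rightarrow> nat \<Rightarrow> real mat" where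
  "Dl_inv dx dy dz nx ny nz = bdiag3
     ((1/dx) \<cdot>\<^sub>m 1\<^sub>m (nx*(ny+1)*(nz+1)))
     ((1/dy) \<cdot>\<^sub>m 1\<^sub>m ((nx+1)*ny*(nz+1)))
     ((1/dz) \<cdot>\<^sub>m 1\<^sub>m ((nx+1)*(ny+1)*nz))"

(* D_U: node r (0-based) corresponds to node (i,j,k) with
   r = (i-1) + (j-1)(nx+1) + (k-1)(nx+1)(ny+1); U uses 1-based node indices *)
definition DUm :: "nat \<Rightarrow> nat \<Rightarrow> nat \<Rightarrow> (nat \<Rightarrow> nat \<Rightarrow> nat \<Rightarrow> real) \<Rightarrow> real mat" where
  "DUm nx ny nz U = (let N = (nx+1)*(ny+1)*(nz+1) in
     mat N N (\<lambda>(r,s). if r = s then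
        U (r mod (nx+1) + 1) ((r div (nx+1)) mod (ny+1) + 1) (r div ((nx+1)*(ny+1)) + 1)
      else 0))"

definition Hmat :: "real \<Rightarrow> real \<Rightarrow> real \<Rightarrow> real \<Rightarrow> real \<Rightarrow> nat \<Rightarrow> nat \<Rightarrow> nat
                     \<Rightarrow> (nat \<Rightarrow> nat \<Rightarrow> nat \<Rightarrow> real) \<Rightarrow> real mat" where
  "Hmat hbar m dx dy dz nx ny nz U =
     (hbar^2 / (2*m)) \<cdot>\<^sub>m (Dmat nx ny nz * DS dx dy dz nx ny nz * Dl_inv dx dy dz nx ny nz
                           * transpose_mat (Dmat nx ny nz))
     + DV dx dy dz nx ny nz * DUm nx ny nz U"

definition cfl_gen :: "real \<Rightarrow> real \<Rightarrow> real \<Rightarrow> real \<Rightarrow> real \<Rightarrow> nat \<Rightarrow> nat \<Rightarrow> nat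
                     \<Rightarrow> (nat \<Rightarrow> nat \<Rightarrow> nat \<Rightarrow> real) \<Rightarrow> real" where
  "cfl_gen hbar m dx dy dz nx ny nz U =
     2 / spectral_radius (map_mat complex_of_real
       ((1/hbar) \<cdot>\<^sub>m (diag_inv_sqrt (DV dx dy dz nx ny nz) * Hmat hbar m dx dy dz nx ny nz U
                       * diag_inv_sqrt (DV dx dy dz nx ny nz))))"

end

theory Submission
  imports Defs
begin

(* The generalized CFL limit is 2 / rho(B) for the real symmetric matrix
   B = hbar^-1 DV^(-1/2) H DV^(-1/2).  For such B one has |x.Bx| <= rho(B) x.x for every real x,
   with equality rho(B) (a.a + b.b) = |a.Ba + b.Bb| when a and b are the real and imaginary parts
   of an eigenvector for an eigenvalue of maximal modulus.  Writing x = DV^(1/2) y, the form x.Bx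
   is hbar^-1 times a discrete energy of the grid function y (kinetic terms on the edges, potential
   term on the nodes) and x.x is its discrete mass.  All weights are products of trapezoidal
   weights, so energy and mass are the sums of the same quantities over the single cells.  Hence
   rho(B) (mass a + mass b) = |sum of cell energies| <= sum of rho_cell * mass_cell
   <= (max rho_cell) (mass a + mass b), i.e. rho(B) <= max rho_cell, and inverting gives the claim
   because rho(B) > 0. *)

lemma Cauchy_Schwarz_sum:
  fixes a b :: "'a \<Rightarrow> real"
  shows "(\<Sum>i\<in>I. a i * b i)^2 \<le> (\<Sum>i\<in>I. (a i)^2) * (\<Sum>i\<in>I. (b i)^2)"
proof (cases "(\<Sum>i\<in>I. (b i)^2) > 0")
  case False
  then have B: "(\<Sum>i\<in>I. (b i)^2) = 0"
    using sum_nonneg[of I "\<lambda>i. (b i)^2"] by simp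
  have "(\<Sum>i\<in>I. a i * b i) = 0"
  proof (cases "finite I")
    case True
    with B have "\<forall>i\<in>I. (b i)^2 = 0"
      by (subst (asm) sum_nonneg_eq_0_iff) auto
    then show ?thesis
      by simp
  qed simp
  then show ?thesis
    using B by simp
next
  case True
  define A where "A = (\<Sum>i\<in>I. (a i)^2)"
  define B where "B = (\<Sum>i\<in>I. (b i)^2)"
  define C where "C = (\<Sum>i\<in>I. a i * b i)"
  define r where "r = C / B"
  have B: "B > 0"
    using True unfolding B_def .
  have "0 \<le> (\<Sum>i\<in>I. (a i - r * b i)^2)"
    by (rule sum_nonneg) simp
  also have "\<dots> = A - 2 * r * C + r^2 * B"
    unfolding A_def B_def C_def power2_eq_square
    by (simp add: algebra_simps sum.distrib sum_subtractf sum_distrib_left)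
  also have "\<dots> = A - C^2 / B"
    unfolding r_def using B by (simp add: field_simps power2_eq_square)
  finally have "C^2 \<le> A * B"
    using B by (simp add: field_simps)
  then show ?thesis
    unfolding A_def B_def C_def .
qed

lemma doubling_sequence_unbounded:
  fixes f :: "nat \<Rightarrow> real"
  assumes N: "N > 0" and t: "t > 1" and start: "t * N \<le> \<bar>f 0\<bar>"
    and step: "\<And>k. (f k)^2 \<le> N * f (Suc k)"
  shows "\<exists>k. \<bar>f k\<bar> > c"
proof -
  have grow: "N * t^(2^k) \<le> \<bar>f k\<bar>" for k
  proof (induction k)
    case 0
    then show ?case using start by (simp add: mult.commute)
  next
    case (Suc k)
    have "N * (N * t^(2^Suc k)) = (N * t^(2^k))^2"
      by (simp add: power2_eq_square power_mult_distrib mult_ac flip: power_add mult_2)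
    also have "\<dots> \<le> \<bar>f k\<bar>^2"
      using N t by (intro power_mono[OF Suc]) simp
    also have "\<dots> \<le> N * f (Suc k)"
      using step[of k] by simp
    also have "\<dots> \<le> N * \<bar>f (Suc k)\<bar>"
      using N by (intro mult_left_mono) auto
    finally show ?case using N by simp
  qed
  obtain K where K: "c / N < t^K"
    using real_arch_pow[OF t] by blast
  have "t^K \<le> t^(2^K)"
    using t less_exp[of K] by (intro power_increasing) auto
  have "c < N * t^K"
    using K N by (simp add: field_simps)
  also have "\<dots> \<le> N * t^(2^K)"
    using N \<open>t^K \<le> t^(2^K)\<close> by simp
  finally have "c < N * t^(2^K)" .
  then show ?thesis
    using grow[of K] by (intro exI[of _ K]) linarith
qed

lemma ex_bound_ge_of_weighted_sums:
  fixes M e r :: "'a \<Rightarrow> real"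
  assumes "finite I" and M: "\<And>i. M i \<ge> 0" and e: "\<And>i. \<bar>e i\<bar> \<le> r i * M i"
    and pos: "(\<Sum>i\<in>I. M i) > 0" and rho: "rho * (\<Sum>i\<in>I. M i) \<le> \<bar>\<Sum>i\<in>I. e i\<bar>"
  shows "\<exists>i\<in>I. rho \<le> r i"
proof (rule ccontr)
  assume "\<not> ?thesis"
  then have less: "r i < rho" if "i \<in> I" for i
    using that by auto
  obtain i0 where "i0 \<in> I" "M i0 \<noteq> 0"
    using pos by (metis less_irrefl sum.not_neutral_contains_not_neutral)
  then have "r i0 * M i0 < rho * M i0"
    using M[of i0] less[of i0] by (simp add: less_le)
  have "\<bar>\<Sum>i\<in>I. e i\<bar> \<le> (\<Sum>i\<in>I. r i * M i)"
    using sum_abs[of e I] sum_mono[of I "\<lambda>i. \<bar>e i\<bar>", OF e] by linarith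
  also have "\<dots> < (\<Sum>i\<in>I. rho * M i)"
    using \<open>finite I\<close> \<open>i0 \<in> I\<close> \<open>r i0 * M i0 < rho * M i0\<close> less M
    by (intro sum_strict_mono_ex1) (auto intro: mult_right_mono less_imp_le)
  finally show False
    using rho by (simp add: sum_distrib_left)
qed

lemma finite_image_set3:
  assumes "finite A" "finite B" "finite C"
  shows "finite {f i j k | i j k. i \<in> A \<and> j \<in> B \<and> k \<in> C}"
proof (rule finite_subset)
  show "{f i j k | i j k. i \<in> A \<and> j \<in> B \<and> k \<in> C} \<subseteq> (\<lambda>(i,j,k). f i j k) ` (A \<times> B \<times> C)"
  proof
    fix y
    assume "y \<in> {f i j k | i j k. i \<in> A \<and> j \<in> B \<and> k \<in> C}"
    then obtain i j k where "y = f i j k" "i \<in> A" "j \<in> B" "k \<in> C"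
      by blast
    then show "y \<in> (\<lambda>(i,j,k). f i j k) ` (A \<times> B \<times> C)"
      by (intro image_eqI[of _ _ "(i,j,k)"]) auto
  qed
qed (use assms in simp)

lemma sum_lessThan_add:
  fixes f :: "nat \<Rightarrow> 'a::comm_monoid_add"
  shows "(\<Sum>r<p+q. f r) = (\<Sum>r<p. f r) + (\<Sum>s<q. f (p + s))"
  by (induction q) (simp_all add: add.assoc)

lemma sum_lessThan_mult:
  fixes f :: "nat \<Rightarrow> 'a::comm_monoid_add"
  shows "(\<Sum>r<m*n. f r) = (\<Sum>q<m. \<Sum>s<n. f (q*n + s))"
proof (induction m)
  case (Suc m)
  have "(\<Sum>r<Suc m * n. f r) = (\<Sum>r<m*n + n. f r)"
    by (simp add: add.commute)
  also have "\<dots> = (\<Sum>r<m*n. f r) + (\<Sum>s<n. f (m*n + s))"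
    by (rule sum_lessThan_add)
  finally show ?case
    using Suc by simp
qed simp

section \<open>Quadratic forms and the spectral radius of real symmetric matrices\<close>

lemma scalar_prod_sum:
  assumes "y \<in> carrier_vec n"
  shows "x \<bullet> y = (\<Sum>i<n. x$i * y$i)"
  using assms by (auto simp: scalar_prod_def atLeast0LessThan)

lemma quadratic_form_sum:
  fixes A :: "'a::comm_semiring_0 mat"
  assumes "A \<in> carrier_mat n n" "x \<in> carrier_vec n"
  shows "x \<bullet> (A *\<^sub>v x) = (\<Sum>i<n. \<Sum>j<n. x$i * A$$(i,j) * x$j)"
  using assms
  by (auto simp: scalar_prod_def row_def sum_distrib_left mult.assoc atLeast0LessThan intro!: sum.cong)

lemma scalar_prod_Cauchy_Schwarz:
  fixes u v :: "real vec"
  assumes "u \<in> carrier_vec n" "v \<in> carrier_vec n"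
  shows "(u \<bullet> v)^2 \<le> (u \<bullet> u) * (v \<bullet> v)"
  using Cauchy_Schwarz_sum[of "\<lambda>i. u$i" "\<lambda>i. v$i" "{..<n}"]
  by (simp add: scalar_prod_sum[OF assms(1)] scalar_prod_sum[OF assms(2)] power2_eq_square)

lemma pow_mat_add:
  fixes A :: "'a::semiring_1 mat"
  assumes A: "A \<in> carrier_mat n n"
  shows "A ^\<^sub>m (a + b) = A ^\<^sub>m a * A ^\<^sub>m b"
proof (induction b)
  case 0
  then show ?case using A by simp
next
  case (Suc b)
  have "A ^\<^sub>m (a + Suc b) = (A ^\<^sub>m a * A ^\<^sub>m b) * A"
    using Suc by simp
  also have "\<dots> = A ^\<^sub>m a * (A ^\<^sub>m b * A)"
    using A by (intro assoc_mult_mat[of _ n n _ n _ n]) auto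
  finally show ?case by simp
qed

lemma transpose_pow_mat_symmetric:
  fixes C :: "real mat"
  assumes C: "C \<in> carrier_mat n n" and sym: "transpose_mat C = C"
  shows "transpose_mat (C ^\<^sub>m k) = C ^\<^sub>m k"
proof (induction k)
  case 0
  then show ?case using C by simp
next
  case (Suc k)
  have "transpose_mat (C ^\<^sub>m Suc k) = transpose_mat C * transpose_mat (C ^\<^sub>m k)"
    using C by (simp add: transpose_mult[of _ n n _ n])
  also have "\<dots> = C ^\<^sub>m 1 * C ^\<^sub>m k"
    using Suc sym C by simp
  also have "\<dots> = C ^\<^sub>m Suc k"
    using pow_mat_add[OF C, of 1 k] by simp
  finally show ?case .
qed

lemma quadratic_form_square_le:
  fixes M :: "real mat"
  assumes M: "M \<in> carrier_mat n n" and sym: "transpose_mat M = M" and w: "w \<in> carrier_vec n"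
  shows "(w \<bullet> (M *\<^sub>v w))^2 \<le> (w \<bullet> w) * (w \<bullet> ((M * M) *\<^sub>v w))"
proof -
  have "w \<bullet> ((M * M) *\<^sub>v w) = (transpose_mat M *\<^sub>v w) \<bullet> (M *\<^sub>v w)"
    using transpose_vec_mult_scalar[OF M, of "M *\<^sub>v w" w] M w by auto
  then have "w \<bullet> ((M * M) *\<^sub>v w) = (M *\<^sub>v w) \<bullet> (M *\<^sub>v w)"
    using sym by simp
  then show ?thesis
    using scalar_prod_Cauchy_Schwarz[of w n "M *\<^sub>v w"] M w by simp
qed

lemma spectral_radius_nonneg:
  assumes "(A :: complex mat) \<in> carrier_mat n n" "n > 0"
  shows "spectral_radius A \<ge> 0"
  using spectral_radius_mem_max(1)[OF assms] by auto

lemma spectral_radius_smult_le: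
  assumes A: "(A :: complex mat) \<in> carrier_mat n n" and n: "n > 0" and c: "c > 0"
  shows "spectral_radius (complex_of_real c \<cdot>\<^sub>m A) \<le> c * spectral_radius A"
proof -
  have cA: "complex_of_real c \<cdot>\<^sub>m A \<in> carrier_mat n n"
    using A by simp
  obtain mu where mu: "mu \<in> spectrum (complex_of_real c \<cdot>\<^sub>m A)"
    and rho: "spectral_radius (complex_of_real c \<cdot>\<^sub>m A) = norm mu"
    using spectral_radius_mem_max(1)[OF cA n] by auto
  obtain v where "eigenvector (complex_of_real c \<cdot>\<^sub>m A) v mu"
    using mu unfolding spectrum_def eigenvalue_def by auto
  then have v: "v \<in> carrier_vec n" "v \<noteq> 0\<^sub>v n" and ev: "(complex_of_real c \<cdot>\<^sub>m A) *\<^sub>v v = mu \<cdot>\<^sub>v v"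
    unfolding eigenvector_def using A by auto
  have "A *\<^sub>v v = (mu / complex_of_real c) \<cdot>\<^sub>v v"
  proof (rule eq_vecI)
    fix i
    assume "i < dim_vec ((mu / complex_of_real c) \<cdot>\<^sub>v v)"
    then have i: "i < n" using v by auto
    have "complex_of_real c * (row A i \<bullet> v) = mu * v $ i"
      using arg_cong[OF ev, of "\<lambda>u. u $ i"] i A v
      by (simp add: row_def scalar_prod_def sum_distrib_left mult.assoc)
    then show "(A *\<^sub>v v) $ i = ((mu / complex_of_real c) \<cdot>\<^sub>v v) $ i"
      using i A v c by (simp add: field_simps)
  qed (use A v in auto)
  then have "mu / complex_of_real c \<in> spectrum A"
    using v A unfolding spectrum_def eigenvalue_def eigenvector_def by auto
  then have "norm (mu / complex_of_real c) \<le> spectral_radius A"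
    using spectral_radius_mem_max(2)[OF A n] by auto
  then have "norm mu / c \<le> spectral_radius A"
    using c by (simp add: norm_divide)
  then show ?thesis
    using rho c by (simp add: field_simps)
qed

lemma abs_quadratic_form_le_entry_bound:
  fixes M :: "real mat"
  assumes M: "M \<in> carrier_mat n n" and w: "w \<in> carrier_vec n"
    and bound: "\<And>i j. i < n \<Longrightarrow> j < n \<Longrightarrow> \<bar>M $$ (i,j)\<bar> \<le> c"
  shows "\<bar>w \<bullet> (M *\<^sub>v w)\<bar> \<le> c * (\<Sum>i<n. \<bar>w$i\<bar>)^2"
proof -
  have "\<bar>w \<bullet> (M *\<^sub>v w)\<bar> \<le> (\<Sum>i<n. \<Sum>j<n. \<bar>w$i * M$$(i,j) * w$j\<bar>)"
    unfolding quadratic_form_sum[OF M w]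
    by (rule order.trans[OF sum_abs sum_mono[OF sum_abs]])
  also have "\<dots> \<le> (\<Sum>i<n. \<Sum>j<n. \<bar>w$i\<bar> * c * \<bar>w$j\<bar>)"
    by (intro sum_mono) (auto simp: abs_mult intro!: mult_right_mono mult_left_mono bound)
  also have "\<dots> = c * (\<Sum>i<n. \<bar>w$i\<bar>)^2"
    by (simp add: power2_eq_square sum_distrib_left sum_distrib_right mult_ac)
  finally show ?thesis .
qed

lemma quadratic_form_pow_bounded:
  fixes C :: "real mat"
  assumes C: "C \<in> carrier_mat n n" and w: "w \<in> carrier_vec n"
    and rho: "spectral_radius (map_mat complex_of_real C) < 1"
  shows "\<exists>c. \<forall>k. \<bar>w \<bullet> ((C ^\<^sub>m k) *\<^sub>v w)\<bar> \<le> c"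
proof -
  obtain c where c: "\<And>k. norm_bound (map_mat complex_of_real C ^\<^sub>m k) c"
    using spectral_radius_jnf_norm_bound_less_1_upper_triangular[OF _ rho] C by fastforce
  have "\<bar>(C ^\<^sub>m k) $$ (i,j)\<bar> \<le> c" if "i < n" "j < n" for i j k
  proof -
    have "map_mat complex_of_real C ^\<^sub>m k = map_mat complex_of_real (C ^\<^sub>m k)"
      by (rule of_real_hom.mat_hom_pow[OF C, symmetric])
    with c[of k] that C show ?thesis
      unfolding norm_bound_def by auto
  qed
  then have "\<bar>w \<bullet> ((C ^\<^sub>m k) *\<^sub>v w)\<bar> \<le> c * (\<Sum>i<n. \<bar>w$i\<bar>)^2" for k
    using C w by (intro abs_quadratic_form_le_entry_bound) auto
  then show ?thesis
    by blast
qed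

lemma quadratic_form_pow2_square_le:
  fixes C :: "real mat"
  assumes C: "C \<in> carrier_mat n n" and sym: "transpose_mat C = C" and w: "w \<in> carrier_vec n"
  shows "(w \<bullet> ((C ^\<^sub>m (2^k)) *\<^sub>v w))^2 \<le> (w \<bullet> w) * (w \<bullet> ((C ^\<^sub>m (2^Suc k)) *\<^sub>v w))"
proof -
  define M where "M = C ^\<^sub>m (2^k)"
  have M: "M \<in> carrier_mat n n" and M_sym: "transpose_mat M = M"
    unfolding M_def using C transpose_pow_mat_symmetric[OF C sym] by auto
  have "C ^\<^sub>m (2^Suc k) = M * M"
    unfolding M_def using pow_mat_add[OF C, of "2^k" "2^k"] by (simp add: mult_2)
  then show ?thesis
    using quadratic_form_square_le[OF M M_sym w] unfolding M_def by simp
qed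

(* The powers of C stay bounded, whereas Cauchy-Schwarz makes w.C^(2^k)w grow doubly
   exponentially as soon as |w.Cw| > w.w. *)
lemma abs_quadratic_form_le_if_spectral_radius_less_1:
  fixes C :: "real mat"
  assumes C: "C \<in> carrier_mat n n" and sym: "transpose_mat C = C" and w: "w \<in> carrier_vec n"
    and rho: "spectral_radius (map_mat complex_of_real C) < 1"
  shows "\<bar>w \<bullet> (C *\<^sub>v w)\<bar> \<le> w \<bullet> w"
proof (rule ccontr)
  assume "\<not> ?thesis"
  then have gt: "w \<bullet> w < \<bar>w \<bullet> (C *\<^sub>v w)\<bar>" by simp
  have "w \<bullet> w \<ge> 0"
    using w by (simp add: scalar_prod_sum power2_eq_square[symmetric] sum_nonneg)
  moreover have "w \<bullet> w \<noteq> 0"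
  proof
    assume "w \<bullet> w = 0"
    then have "\<forall>i\<in>{..<n}. (w$i)^2 = 0"
      using w by (simp add: scalar_prod_sum power2_eq_square[symmetric] sum_nonneg_eq_0_iff)
    then have "w \<bullet> (C *\<^sub>v w) = 0"
      by (simp add: quadratic_form_sum[OF C w])
    with gt \<open>w \<bullet> w = 0\<close> show False
      by simp
  qed
  ultimately have N: "w \<bullet> w > 0"
    by simp
  obtain c where bounded: "\<And>k. \<bar>w \<bullet> ((C ^\<^sub>m k) *\<^sub>v w)\<bar> \<le> c"
    using quadratic_form_pow_bounded[OF C w rho] by blast
  define f where "f k = w \<bullet> ((C ^\<^sub>m (2^k)) *\<^sub>v w)" for k
  have "f 0 = w \<bullet> (C *\<^sub>v w)"
    unfolding f_def using C by simp
  then have "(\<bar>f 0\<bar> / (w \<bullet> w)) * (w \<bullet> w) \<le> \<bar>f 0\<bar>" and "\<bar>f 0\<bar> / (w \<bullet> w) > 1"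
    using N gt by simp_all
  moreover have "(f k)^2 \<le> (w \<bullet> w) * f (Suc k)" for k
    unfolding f_def by (rule quadratic_form_pow2_square_le[OF C sym w])
  ultimately obtain k where "\<bar>f k\<bar> > c"
    using doubling_sequence_unbounded[OF N] by blast
  with bounded[of "2^k"] show False
    unfolding f_def by simp
qed

lemma abs_quadratic_form_le_spectral_radius:
  fixes B :: "real mat"
  assumes B: "B \<in> carrier_mat n n" and sym: "transpose_mat B = B" and w: "w \<in> carrier_vec n"
  shows "\<bar>w \<bullet> (B *\<^sub>v w)\<bar> \<le> spectral_radius (map_mat complex_of_real B) * (w \<bullet> w)"
proof (cases "n = 0")
  case True
  then show ?thesis
    using w B by (simp add: scalar_prod_sum[of _ 0])
next
  case False
  let ?rho = "spectral_radius (map_mat complex_of_real B)"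
  have rho: "?rho \<ge> 0"
    using B False by (intro spectral_radius_nonneg[of _ n]) auto
  have N: "w \<bullet> w \<ge> 0"
    using w by (simp add: scalar_prod_sum power2_eq_square[symmetric] sum_nonneg)
  have scaled: "\<bar>w \<bullet> (B *\<^sub>v w)\<bar> \<le> r * (w \<bullet> w)" if r: "?rho < r" for r
  proof -
    have r0: "r > 0" using rho r by simp
    define C where "C = (1/r) \<cdot>\<^sub>m B"
    have C: "C \<in> carrier_mat n n"
      unfolding C_def using B by simp
    have "transpose_mat C = (1/r) \<cdot>\<^sub>m transpose_mat B"
      unfolding C_def by (rule eq_matI) auto
    then have C_sym: "transpose_mat C = C"
      using sym unfolding C_def by simp
    have "map_mat complex_of_real C = complex_of_real (1/r) \<cdot>\<^sub>m map_mat complex_of_real B"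
      unfolding C_def by (rule eq_matI) auto
    then have "spectral_radius (map_mat complex_of_real C) \<le> (1/r) * ?rho"
      using spectral_radius_smult_le[of _ n "1/r"] B False r0 by simp
    also have "\<dots> < 1"
      using r r0 by (simp add: field_simps)
    finally have "\<bar>w \<bullet> (C *\<^sub>v w)\<bar> \<le> w \<bullet> w"
      by (rule abs_quadratic_form_le_if_spectral_radius_less_1[OF C C_sym w])
    moreover have "w \<bullet> (C *\<^sub>v w) = (w \<bullet> (B *\<^sub>v w)) / r"
      unfolding quadratic_form_sum[OF C w] quadratic_form_sum[OF B w] sum_divide_distrib
      using B by (intro sum.cong refl) (simp add: C_def)
    ultimately show ?thesis
      using r0 by (simp add: abs_div field_simps)
  qed
  show ?thesis
  proof (rule field_le_epsilon)
    fix e :: real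
    assume e: "e > 0"
    show "\<bar>w \<bullet> (B *\<^sub>v w)\<bar> \<le> ?rho * (w \<bullet> w) + e"
    proof (cases "w \<bullet> w = 0")
      case True
      then show ?thesis using scaled[of "?rho + 1"] e by simp
    next
      case False
      then have "\<bar>w \<bullet> (B *\<^sub>v w)\<bar> \<le> (?rho + e / (w \<bullet> w)) * (w \<bullet> w)"
        using scaled e N by simp
      also have "\<dots> = ?rho * (w \<bullet> w) + e"
        using False by (simp add: distrib_right)
      finally show ?thesis .
    qed
  qed
qed

lemma complex_quadratic_form_real_symmetric:
  fixes B :: "real mat" and v :: "complex vec"
  assumes B: "B \<in> carrier_mat n n" and sym: "transpose_mat B = B" and v: "v \<in> carrier_vec n"
  defines "a \<equiv> vec n (\<lambda>i. Re (v$i))" and "b \<equiv> vec n (\<lambda>i. Im (v$i))"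
  shows "(\<Sum>i<n. cnj (v$i) * (map_mat complex_of_real B *\<^sub>v v)$i)
    = complex_of_real (a \<bullet> (B *\<^sub>v a) + b \<bullet> (B *\<^sub>v b))"
    (is "?L = _")
proof -
  have a: "a \<in> carrier_vec n" and b: "b \<in> carrier_vec n"
    unfolding a_def b_def by auto
  have L: "?L = (\<Sum>i<n. \<Sum>j<n. cnj (v$i) * (complex_of_real (B$$(i,j)) * v$j))"
    using B v by (intro sum.cong refl) (auto simp: scalar_prod_def sum_distrib_left atLeast0LessThan)
  have "Re ?L = a \<bullet> (B *\<^sub>v a) + b \<bullet> (B *\<^sub>v b)"
    unfolding L Re_sum quadratic_form_sum[OF B a] quadratic_form_sum[OF B b]
      sum.distrib[symmetric]
    by (intro sum.cong refl) (simp add: a_def b_def algebra_simps)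
  moreover have "Im ?L = 0"
  proof -
    have B_swap: "B$$(j,i) = B$$(i,j)" if "i < n" "j < n" for i j
      using that B arg_cong[OF sym, of "\<lambda>M. M $$ (i,j)"] by simp
    have "(\<Sum>i<n. \<Sum>j<n. B$$(i,j) * (Im (v$i) * Re (v$j)))
        = (\<Sum>j<n. \<Sum>i<n. B$$(i,j) * (Im (v$i) * Re (v$j)))"
      by (rule sum.swap)
    also have "\<dots> = (\<Sum>i<n. \<Sum>j<n. B$$(i,j) * (Re (v$i) * Im (v$j)))"
      by (intro sum.cong refl) (auto simp: B_swap mult_ac)
    finally show ?thesis
      unfolding L Im_sum sum_subtractf[symmetric]
      by (simp add: algebra_simps sum_subtractf)
  qed
  ultimately show ?thesis
    by (simp add: complex_eq_iff)
qed

lemma spectral_radius_real_symmetric_attained: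
  fixes B :: "real mat"
  assumes B: "B \<in> carrier_mat n n" and sym: "transpose_mat B = B" and n: "n > 0"
  obtains a b where "a \<in> carrier_vec n" "b \<in> carrier_vec n" "a \<bullet> a + b \<bullet> b > 0"
    "spectral_radius (map_mat complex_of_real B) * (a \<bullet> a + b \<bullet> b)
      = \<bar>a \<bullet> (B *\<^sub>v a) + b \<bullet> (B *\<^sub>v b)\<bar>"
proof -
  define A where "A = map_mat complex_of_real B"
  have A: "A \<in> carrier_mat n n" using B unfolding A_def by simp
  obtain lam where lam: "lam \<in> spectrum A" and rho: "spectral_radius A = norm lam"
    using spectral_radius_mem_max(1)[OF A n] by auto
  obtain v where "eigenvector A v lam"
    using lam unfolding spectrum_def eigenvalue_def by auto
  then have v: "v \<in> carrier_vec n" "v \<noteq> 0\<^sub>v n" and ev: "A *\<^sub>v v = lam \<cdot>\<^sub>v v"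
    unfolding eigenvector_def using A by auto
  define a where "a = vec n (\<lambda>i. Re (v$i))"
  define b where "b = vec n (\<lambda>i. Im (v$i))"
  define N where "N = a \<bullet> a + b \<bullet> b"
  have N_sum: "N = (\<Sum>i<n. (Re (v$i))^2 + (Im (v$i))^2)"
    unfolding N_def a_def b_def scalar_prod_def
    by (simp add: power2_eq_square sum.distrib atLeast0LessThan)
  have "N > 0"
  proof -
    obtain i where i: "i < n" "v$i \<noteq> 0"
      using v by (metis carrier_vecD eq_vecI index_zero_vec(1,2))
    then have "0 < (Re (v$i))^2 + (Im (v$i))^2"
      by (auto simp: sum_power2_gt_zero_iff complex_eq_iff)
    also have "\<dots> \<le> N"
      unfolding N_sum using i by (intro member_le_sum) auto
    finally show ?thesis .
  qed
  have "(\<Sum>i<n. cnj (v$i) * (A *\<^sub>v v)$i) = lam * complex_of_real N"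
  proof -
    have "(\<Sum>i<n. cnj (v$i) * (A *\<^sub>v v)$i) = lam * (\<Sum>i<n. v$i * cnj (v$i))"
      unfolding ev sum_distrib_left using v by (intro sum.cong) auto
    then show ?thesis
      unfolding N_sum complex_mult_cnj by (simp add: sum.distrib)
  qed
  then have "lam * complex_of_real N = complex_of_real (a \<bullet> (B *\<^sub>v a) + b \<bullet> (B *\<^sub>v b))"
    using complex_quadratic_form_real_symmetric[OF B sym v(1)] unfolding A_def a_def b_def by simp
  then have "norm lam * N = \<bar>a \<bullet> (B *\<^sub>v a) + b \<bullet> (B *\<^sub>v b)\<bar>"
    using arg_cong[of _ _ norm] \<open>N > 0\<close> by (metis abs_of_pos norm_mult norm_of_real)
  moreover have "a \<in> carrier_vec n" "b \<in> carrier_vec n"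
    unfolding a_def b_def by auto
  moreover have "spectral_radius (map_mat complex_of_real B) = norm lam"
    using rho unfolding A_def .
  ultimately show ?thesis
    using that[of a b] \<open>N > 0\<close> unfolding N_def by simp
qed

section \<open>Diagonal matrices, Kronecker products and grid indices\<close>

definition diag_fn :: "nat \<Rightarrow> (nat \<Rightarrow> real) \<Rightarrow> real mat" where
  "diag_fn n f = mat n n (\<lambda>(i,j). if i = j then f i else 0)"

lemma diag_fn_carrier[simp]: "diag_fn n f \<in> carrier_mat n n"
  and dim_diag_fn[simp]: "dim_row (diag_fn n f) = n" "dim_col (diag_fn n f) = n"
  unfolding diag_fn_def by auto

lemma index_diag_fn[simp]: "i < n \<Longrightarrow> j < n \<Longrightarrow> diag_fn n f $$ (i,j) = (if i = j then f i else 0)"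
  unfolding diag_fn_def by auto

lemma one_diag_fn: "1\<^sub>m n = diag_fn n (\<lambda>_. 1)"
  by (rule eq_matI) auto

lemma smult_diag_fn: "c \<cdot>\<^sub>m diag_fn n f = diag_fn n (\<lambda>i. c * f i)"
  by (rule eq_matI) auto

lemma diag_inv_sqrt_diag_fn: "diag_inv_sqrt (diag_fn n f) = diag_fn n (\<lambda>i. 1 / sqrt (f i))"
  unfolding diag_inv_sqrt_def by (rule eq_matI) auto

lemma index_diag_fn_mult:
  assumes "M \<in> carrier_mat n m" "i < n" "j < m"
  shows "(diag_fn n f * M) $$ (i,j) = f i * M $$ (i,j)"
proof -
  have "(diag_fn n f * M) $$ (i,j) = (\<Sum>k<n. diag_fn n f $$ (i,k) * M $$ (k,j))"
    using assms by (simp add: scalar_prod_def atLeast0LessThan)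
  also have "\<dots> = (\<Sum>k<n. if k = i then f i * M $$ (i,j) else 0)"
    using assms by (intro sum.cong) auto
  finally show ?thesis using assms by simp
qed

lemma index_mult_diag_fn:
  assumes "M \<in> carrier_mat m n" "i < m" "j < n"
  shows "(M * diag_fn n f) $$ (i,j) = M $$ (i,j) * f j"
proof -
  have "(M * diag_fn n f) $$ (i,j) = (\<Sum>k<n. M $$ (i,k) * diag_fn n f $$ (k,j))"
    using assms by (simp add: scalar_prod_def atLeast0LessThan)
  also have "\<dots> = (\<Sum>k<n. if k = j then M $$ (i,j) * f j else 0)"
    using assms by (intro sum.cong) auto
  finally show ?thesis using assms by simp
qed

lemma diag_fn_mult: "diag_fn n f * diag_fn n g = diag_fn n (\<lambda>i. f i * g i)"
proof (rule eq_matI)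
  fix i j
  assume "i < dim_row (diag_fn n (\<lambda>i. f i * g i))" "j < dim_col (diag_fn n (\<lambda>i. f i * g i))"
  then show "(diag_fn n f * diag_fn n g) $$ (i,j) = diag_fn n (\<lambda>i. f i * g i) $$ (i,j)"
    by (simp add: index_diag_fn_mult[of _ n n] del: index_mult_mat)
qed auto

lemma index_mult_diag_fn_transpose:
  assumes D: "D \<in> carrier_mat n e" and "i < n" "j < n"
  shows "(D * diag_fn e g * transpose_mat D) $$ (i,j) = (\<Sum>l<e. D$$(i,l) * g l * D$$(j,l))"
proof -
  have DG: "D * diag_fn e g \<in> carrier_mat n e"
    using D by simp
  have "(D * diag_fn e g * transpose_mat D) $$ (i,j) = row (D * diag_fn e g) i \<bullet> col (transpose_mat D) j"
    using assms by simp
  also have "\<dots> = (\<Sum>l<e. (D * diag_fn e g) $$ (i,l) * D$$(j,l))"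
    using assms DG by (simp only: scalar_prod_def, simp add: atLeast0LessThan)
  also have "\<dots> = (\<Sum>l<e. D$$(i,l) * g l * D$$(j,l))"
    using assms by (intro sum.cong refl) (simp add: index_mult_diag_fn[OF D] del: index_mult_mat)
  finally show ?thesis .
qed

definition join3 :: "nat \<Rightarrow> nat \<Rightarrow> (nat \<Rightarrow> real) \<Rightarrow> (nat \<Rightarrow> real) \<Rightarrow> (nat \<Rightarrow> real) \<Rightarrow> nat \<Rightarrow> real" where
  "join3 a b f g h i = (if i < a then f i else if i < a + b then g (i - a) else h (i - a - b))"

lemma bdiag3_diag_fn: "bdiag3 (diag_fn a f) (diag_fn b g) (diag_fn c h) = diag_fn (a+b+c) (join3 a b f g h)"
proof (rule eq_matI)
  fix i j
  assume "i < dim_row (diag_fn (a+b+c) (join3 a b f g h))" "j < dim_col (diag_fn (a+b+c) (join3 a b f g h))"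
  then have "i < a+b+c" "j < a+b+c" by auto
  then show "bdiag3 (diag_fn a f) (diag_fn b g) (diag_fn c h) $$ (i,j) = diag_fn (a+b+c) (join3 a b f g h) $$ (i,j)"
    unfolding bdiag3_def Let_def dim_diag_fn
    by (cases "i < a"; cases "j < a"; cases "i < a + b"; cases "j < a + b"; auto simp: join3_def)
qed (auto simp: bdiag3_def Let_def)

lemma index_less_mult:
  assumes "i1 < m1" "i2 < m2"
  shows "i1 * m2 + i2 < m1 * (m2::nat)"
proof -
  have "i1 * m2 + i2 < (i1 + 1) * m2"
    using assms by simp
  also have "\<dots> \<le> m1 * m2"
    using assms by (intro mult_le_mono1) simp
  finally show ?thesis .
qed

lemma kron_carrier:
  "A \<in> carrier_mat m1 n1 \<Longrightarrow> B \<in> carrier_mat m2 n2 \<Longrightarrow> kron A B \<in> carrier_mat (m1*m2) (n1*n2)"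
  unfolding kron_def by auto

lemma index_kron:
  assumes "A \<in> carrier_mat m1 n1" "B \<in> carrier_mat m2 n2"
    and "i1 < m1" "i2 < m2" "j1 < n1" "j2 < n2"
  shows "kron A B $$ (i1 * m2 + i2, j1 * n2 + j2) = A $$ (i1,j1) * B $$ (i2,j2)"
  using assms index_less_mult[of i1 m1 i2 m2] index_less_mult[of j1 n1 j2 n2] unfolding kron_def by auto

lemma kron_diag_fn: "kron (diag_fn m f) (diag_fn n g) = diag_fn (m*n) (\<lambda>r. f (r div n) * g (r mod n))"
proof (rule eq_matI)
  fix i j
  assume "i < dim_row (diag_fn (m*n) (\<lambda>r. f (r div n) * g (r mod n)))"
    "j < dim_col (diag_fn (m*n) (\<lambda>r. f (r div n) * g (r mod n)))"
  then have ij: "i < m*n" "j < m*n" by auto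
  then have "n > 0" by (cases n) auto
  moreover have "i div n < m" "j div n < m"
    using ij by (auto simp: less_mult_imp_div_less)
  moreover have "(i = j) = (i div n = j div n \<and> i mod n = j mod n)"
    by (metis div_mult_mod_eq)
  ultimately show "kron (diag_fn m f) (diag_fn n g) $$ (i,j) = diag_fn (m*n) (\<lambda>r. f (r div n) * g (r mod n)) $$ (i,j)"
    using ij unfolding kron_def by auto
qed (auto simp: kron_def)

(* The row-major position of entry (i,j,k) of an a-by-b-by-c array, i.e. the index of
   e_k (x) e_j (x) e_i in a threefold Kronecker product. *)

definition lin_index :: "nat \<Rightarrow> nat \<Rightarrow> nat \<Rightarrow> nat \<Rightarrow> nat \<Rightarrow> nat" where
  "lin_index a b i j k = k * (b * a) + (j * a + i)"

lemma lin_index_less: "i < a \<Longrightarrow> j < b \<Longrightarrow> k < c \<Longrightarrow> lin_index a b i j k < c * (b * a)"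
  unfolding lin_index_def by (intro index_less_mult) auto

lemma lin_index_div_mod:
  assumes "i < a" "j < b"
  shows "lin_index a b i j k mod a = i" "lin_index a b i j k div a mod b = j"
    "lin_index a b i j k div (a * b) = k" "lin_index a b i j k div (b * a) = k"
    "lin_index a b i j k mod (b * a) div a = j" "lin_index a b i j k mod (b * a) mod a = i"
proof -
  have eq: "lin_index a b i j k = (k * b + j) * a + i"
    unfolding lin_index_def by (simp add: algebra_simps)
  have ji: "j * a + i < b * a"
    using assms by (intro index_less_mult)
  have div_mod: "(k * q + s) div q = k" "(k * q + s) mod q = s" if "s < q" for q s :: nat
    using that by auto
  show "lin_index a b i j k mod a = i" "lin_index a b i j k div a mod b = j"
    unfolding eq using assms by simp_all
  show k: "lin_index a b i j k div (b * a) = k"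
    unfolding lin_index_def using div_mod(1)[OF ji] .
  then show "lin_index a b i j k div (a * b) = k"
    by (simp add: mult.commute)
  have "lin_index a b i j k mod (b * a) = j * a + i"
    unfolding lin_index_def using div_mod(2)[OF ji] .
  then show "lin_index a b i j k mod (b * a) div a = j" "lin_index a b i j k mod (b * a) mod a = i"
    using assms by simp_all
qed

lemma sum_lin_index:
  fixes f :: "nat \<Rightarrow> 'a::comm_monoid_add"
  shows "(\<Sum>r<c*(b*a). f r) = (\<Sum>k<c. \<Sum>j<b. \<Sum>i<a. f (lin_index a b i j k))"
  unfolding lin_index_def by (simp add: sum_lessThan_mult)

lemma sum_kron3_column:
  assumes P: "P \<in> carrier_mat c c'" and Q: "Q \<in> carrier_mat b b'" and R: "R \<in> carrier_mat a a'"
    and "k < c'" "j < b'" "i < a'"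
  shows "(\<Sum>r<c*(b*a). kron P (kron Q R) $$ (r, lin_index a' b' i j k) * f r)
       = (\<Sum>k'<c. P$$(k',k) * (\<Sum>j'<b. Q$$(j',j) * (\<Sum>i'<a. R$$(i',i) * f (lin_index a b i' j' k'))))"
proof -
  have QR: "kron Q R \<in> carrier_mat (b*a) (b'*a')"
    by (rule kron_carrier[OF Q R])
  have ji: "j*a'+i < b'*a'"
    using assms by (intro index_less_mult)
  have "(\<Sum>r<c*(b*a). kron P (kron Q R) $$ (r, lin_index a' b' i j k) * f r)
      = (\<Sum>k'<c. \<Sum>s<b*a. kron P (kron Q R) $$ (k'*(b*a)+s, k*(b'*a')+(j*a'+i)) * f (k'*(b*a)+s))"
    unfolding lin_index_def by (rule sum_lessThan_mult)
  also have "\<dots> = (\<Sum>k'<c. \<Sum>s<b*a. P$$(k',k) * (kron Q R $$ (s, j*a'+i) * f (k'*(b*a)+s)))"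
    by (intro sum.cong refl) (simp add: index_kron[OF P QR _ _ \<open>k < c'\<close> ji])
  also have "\<dots> = (\<Sum>k'<c. P$$(k',k) * (\<Sum>j'<b. \<Sum>i'<a. kron Q R $$ (j'*a+i', j*a'+i) * f (k'*(b*a)+(j'*a+i'))))"
    by (intro sum.cong refl) (simp add: sum_distrib_left[symmetric] sum_lessThan_mult)
  also have "\<dots> = (\<Sum>k'<c. P$$(k',k) * (\<Sum>j'<b. \<Sum>i'<a. (Q$$(j',j) * R$$(i',i)) * f (k'*(b*a)+(j'*a+i'))))"
    by (intro sum.cong refl arg_cong2[where f="(*)"])
      (simp add: index_kron[OF Q R _ _ \<open>j < b'\<close> \<open>i < a'\<close>])
  also have "\<dots> = (\<Sum>k'<c. P$$(k',k) * (\<Sum>j'<b. Q$$(j',j) * (\<Sum>i'<a. R$$(i',i) * f (lin_index a b i' j' k'))))"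
    unfolding lin_index_def by (simp add: sum_distrib_left mult.assoc)
  finally show ?thesis .
qed

lemma sum_one_mat_column:
  assumes "k < n"
  shows "(\<Sum>k'<n. (1\<^sub>m n :: real mat) $$ (k',k) * F k') = F k"
proof -
  have "(\<Sum>k'<n. (1\<^sub>m n :: real mat) $$ (k',k) * F k') = (\<Sum>k'<n. if k' = k then F k else 0)"
    using assms by (intro sum.cong) auto
  then show ?thesis
    using assms by simp
qed

lemma sum_transpose_Wm_column:
  assumes "i < p"
  shows "(\<Sum>i'<p+1. transpose_mat (Wm p) $$ (i',i) * F i') = F (i+1) - F i"
proof -
  have "(\<Sum>i'<p+1. transpose_mat (Wm p) $$ (i',i) * F i')
     = (\<Sum>i'<p+1. (if i' = i+1 then F i' else 0) - (if i' = i then F i' else 0))"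
    using assms by (intro sum.cong refl) (auto simp: Wm_def)
  also have "\<dots> = F (i+1) - F i"
    using assms by (simp add: sum_subtractf)
  finally show ?thesis .
qed

lemma Wm_carrier: "Wm p \<in> carrier_mat p (p+1)"
  unfolding Wm_def by auto

lemma hcat3_carrier:
  "A \<in> carrier_mat n p \<Longrightarrow> B \<in> carrier_mat n q \<Longrightarrow> C \<in> carrier_mat n s \<Longrightarrow> hcat3 A B C \<in> carrier_mat n (p+q+s)"
  unfolding hcat3_def by auto

lemma sum_hcat3_column:
  assumes "A \<in> carrier_mat n p" "B \<in> carrier_mat n q" "C \<in> carrier_mat n s"
  shows "e < p \<Longrightarrow> (\<Sum>r<n. hcat3 A B C $$ (r,e) * y r) = (\<Sum>r<n. A $$ (r,e) * y r)"
    "e < q \<Longrightarrow> (\<Sum>r<n. hcat3 A B C $$ (r,p+e) * y r) = (\<Sum>r<n. B $$ (r,e) * y r)"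
    "e < s \<Longrightarrow> (\<Sum>r<n. hcat3 A B C $$ (r,p+q+e) * y r) = (\<Sum>r<n. C $$ (r,e) * y r)"
  using assms unfolding hcat3_def by (auto intro!: sum.cong)

section \<open>Trapezoidal sums\<close>

definition trapezoid_weight :: "nat \<Rightarrow> nat \<Rightarrow> real" where
  "trapezoid_weight p i = (if i = 0 \<or> i = p - 1 then 1/2 else 1)"

lemma Itil_diag_fn: "Itil p = diag_fn p (trapezoid_weight p)"
  unfolding Itil_def diag_fn_def trapezoid_weight_def by (rule eq_matI) auto

lemma trapezoid_weight_pos: "trapezoid_weight p i > 0"
  unfolding trapezoid_weight_def by simp

definition trapezoid_sum :: "nat \<Rightarrow> (nat \<Rightarrow> real) \<Rightarrow> real" where
  "trapezoid_sum n g = (\<Sum>j<n+1. trapezoid_weight (n+1) j * g j)"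

lemma trapezoid_sum_one: "trapezoid_sum 1 g = (g 0 + g 1) / 2"
  unfolding trapezoid_sum_def trapezoid_weight_def by (simp add: numeral_2_eq_2 add_divide_distrib)

lemma trapezoid_sum_cells:
  assumes "n \<ge> 1"
  shows "trapezoid_sum n g = (\<Sum>j<n. trapezoid_sum 1 (\<lambda>b. g (j + b)))"
proof -
  have "trapezoid_sum n g
      = (\<Sum>j<n+1. (if j < n then g j / 2 else 0) + (if 1 \<le> j then g j / 2 else 0))"
    unfolding trapezoid_sum_def using assms
    by (intro sum.cong refl) (auto simp: trapezoid_weight_def)
  also have "\<dots> = (\<Sum>j<n+1. (if j < n then g j / 2 else 0)) + (\<Sum>j<n+1. (if 1 \<le> j then g j / 2 else 0))"
    by (rule sum.distrib)
  also have "(\<Sum>j<n+1. (if j < n then g j / 2 else 0)) = (\<Sum>j<n. g j / 2)"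
    by simp
  also have "(\<Sum>j<n+1. (if 1 \<le> j then g j / 2 else 0)) = (\<Sum>j<n. g (j+1) / 2)"
    by (simp only: Suc_eq_plus1[symmetric] sum.lessThan_Suc_shift) simp
  also have "(\<Sum>j<n. g j / 2) + (\<Sum>j<n. g (j+1) / 2) = (\<Sum>j<n. trapezoid_sum 1 (\<lambda>b. g (j + b)))"
    unfolding trapezoid_sum_one by (simp add: sum.distrib add_divide_distrib)
  finally show ?thesis .
qed

lemma trapezoid_sum_sum: "trapezoid_sum n (\<lambda>j. \<Sum>x\<in>A. h x j) = (\<Sum>x\<in>A. trapezoid_sum n (h x))"
  unfolding trapezoid_sum_def by (simp add: sum_distrib_left sum.swap[of _ A])

lemma trapezoid_sum_nonneg: "(\<And>j. g j \<ge> 0) \<Longrightarrow> trapezoid_sum n g \<ge> 0"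
  unfolding trapezoid_sum_def by (intro sum_nonneg mult_nonneg_nonneg less_imp_le[OF trapezoid_weight_pos]) auto

lemma trapezoid_sum_pos: "(\<And>j. g j > 0) \<Longrightarrow> trapezoid_sum n g > 0"
  unfolding trapezoid_sum_def by (intro sum_pos mult_pos_pos trapezoid_weight_pos) auto

lemma trapezoid_sum_triple:
  "(\<Sum>k<c+1. \<Sum>j<b+1. \<Sum>i<a+1. trapezoid_weight (c+1) k * (trapezoid_weight (b+1) j * trapezoid_weight (a+1) i) * f i j k)
    = trapezoid_sum c (\<lambda>k. trapezoid_sum b (\<lambda>j. trapezoid_sum a (\<lambda>i. f i j k)))"
  unfolding trapezoid_sum_def by (simp only: sum_distrib_left mult.assoc)

section \<open>The discrete Hamiltonian as an energy functional\<close>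

definition shift_grid :: "nat \<Rightarrow> nat \<Rightarrow> nat \<Rightarrow> (nat \<Rightarrow> nat \<Rightarrow> nat \<Rightarrow> 'a) \<Rightarrow> nat \<Rightarrow> nat \<Rightarrow> nat \<Rightarrow> 'a" where
  "shift_grid i0 j0 k0 Y = (\<lambda>a b c. Y (i0 + a) (j0 + b) (k0 + c))"

(* Nodes and the x-, y- and z-edges (the three column blocks of Dmat) are numbered in Kronecker
   order.  Counts and indices are constants rather than abbreviations so that the simplifier does
   not normalise the arithmetic hidden in them. *)
definition node_count :: "nat \<Rightarrow> nat \<Rightarrow> nat \<Rightarrow> nat" where
  "node_count nx ny nz = (nz+1) * ((ny+1) * (nx+1))"

definition x_edge_count :: "nat \<Rightarrow> nat \<Rightarrow> nat \<Rightarrow> nat" where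
  "x_edge_count nx ny nz = (nz+1) * ((ny+1) * nx)"

definition y_edge_count :: "nat \<Rightarrow> nat \<Rightarrow> nat \<Rightarrow> nat" where
  "y_edge_count nx ny nz = (nz+1) * (ny * (nx+1))"

definition z_edge_count :: "nat \<Rightarrow> nat \<Rightarrow> nat \<Rightarrow> nat" where
  "z_edge_count nx ny nz = nz * ((ny+1) * (nx+1))"

abbreviation edge_count :: "nat \<Rightarrow> nat \<Rightarrow> nat \<Rightarrow> nat" where
  "edge_count nx ny nz \<equiv> x_edge_count nx ny nz + y_edge_count nx ny nz + z_edge_count nx ny nz"

definition node_index :: "nat \<Rightarrow> nat \<Rightarrow> nat \<Rightarrow> nat \<Rightarrow> nat \<Rightarrow> nat" where
  "node_index nx ny i j k = lin_index (nx+1) (ny+1) i j k"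

definition x_edge_index :: "nat \<Rightarrow> nat \<Rightarrow> nat \<Rightarrow> nat \<Rightarrow> nat \<Rightarrow> nat" where
  "x_edge_index nx ny i j k = lin_index nx (ny+1) i j k"

definition y_edge_index :: "nat \<Rightarrow> nat \<Rightarrow> nat \<Rightarrow> nat \<Rightarrow> nat \<Rightarrow> nat \<Rightarrow> nat" where
  "y_edge_index nx ny nz i j k = x_edge_count nx ny nz + lin_index (nx+1) ny i j k"

definition z_edge_index :: "nat \<Rightarrow> nat \<Rightarrow> nat \<Rightarrow> nat \<Rightarrow> nat \<Rightarrow> nat \<Rightarrow> nat" where
  "z_edge_index nx ny nz i j k = x_edge_count nx ny nz + y_edge_count nx ny nz + lin_index (nx+1) (ny+1) i j k"

lemma node_count_pos: "node_count nx ny nz > 0"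
  unfolding node_count_def by simp

lemma node_index_less: "i \<le> nx \<Longrightarrow> j \<le> ny \<Longrightarrow> k \<le> nz \<Longrightarrow> node_index nx ny i j k < node_count nx ny nz"
  unfolding node_index_def node_count_def by (intro lin_index_less) auto

lemma sum_node_index:
  "(\<Sum>r<node_count nx ny nz. f r) = (\<Sum>k<nz+1. \<Sum>j<ny+1. \<Sum>i<nx+1. f (node_index nx ny i j k))"
  unfolding node_count_def node_index_def by (rule sum_lin_index)

lemma sum_edge_index:
  "(\<Sum>e<edge_count nx ny nz. f e) = (\<Sum>k<nz+1. \<Sum>j<ny+1. \<Sum>i<nx. f (x_edge_index nx ny i j k))
     + (\<Sum>k<nz+1. \<Sum>j<ny. \<Sum>i<nx+1. f (y_edge_index nx ny nz i j k))
     + (\<Sum>k<nz. \<Sum>j<ny+1. \<Sum>i<nx+1. f (z_edge_index nx ny nz i j k))"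
proof -
  have "(\<Sum>e<edge_count nx ny nz. f e) = (\<Sum>e<x_edge_count nx ny nz. f e)
      + (\<Sum>e<y_edge_count nx ny nz. f (x_edge_count nx ny nz + e))
      + (\<Sum>e<z_edge_count nx ny nz. f (x_edge_count nx ny nz + y_edge_count nx ny nz + e))"
    by (simp only: sum_lessThan_add[of f "x_edge_count nx ny nz + y_edge_count nx ny nz"]
        sum_lessThan_add[of f "x_edge_count nx ny nz"])
  also have "(\<Sum>e<x_edge_count nx ny nz. f e) = (\<Sum>k<nz+1. \<Sum>j<ny+1. \<Sum>i<nx. f (x_edge_index nx ny i j k))"
    unfolding x_edge_count_def x_edge_index_def by (rule sum_lin_index)
  also have "(\<Sum>e<y_edge_count nx ny nz. f (x_edge_count nx ny nz + e))
      = (\<Sum>k<nz+1. \<Sum>j<ny. \<Sum>i<nx+1. f (y_edge_index nx ny nz i j k))"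
    unfolding y_edge_count_def y_edge_index_def by (rule sum_lin_index)
  also have "(\<Sum>e<z_edge_count nx ny nz. f (x_edge_count nx ny nz + y_edge_count nx ny nz + e))
      = (\<Sum>k<nz. \<Sum>j<ny+1. \<Sum>i<nx+1. f (z_edge_index nx ny nz i j k))"
    unfolding z_edge_count_def z_edge_index_def by (rule sum_lin_index)
  finally show ?thesis .
qed

lemma transpose_Wm_carrier: "transpose_mat (Wm p) \<in> carrier_mat (p+1) p"
  using Wm_carrier by simp

lemma Dmat_blocks_carrier:
  "- kron (1\<^sub>m (nz+1)) (kron (1\<^sub>m (ny+1)) (transpose_mat (Wm nx)))
     \<in> carrier_mat (node_count nx ny nz) (x_edge_count nx ny nz)"
  "- kron (1\<^sub>m (nz+1)) (kron (transpose_mat (Wm ny)) (1\<^sub>m (nx+1)))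
     \<in> carrier_mat (node_count nx ny nz) (y_edge_count nx ny nz)"
  "- kron (transpose_mat (Wm nz)) (kron (1\<^sub>m (ny+1)) (1\<^sub>m (nx+1)))
     \<in> carrier_mat (node_count nx ny nz) (z_edge_count nx ny nz)"
  unfolding node_count_def x_edge_count_def y_edge_count_def z_edge_count_def
  by (intro uminus_carrier_mat kron_carrier one_carrier_mat transpose_Wm_carrier)+

lemma Dmat_carrier: "Dmat nx ny nz \<in> carrier_mat (node_count nx ny nz) (edge_count nx ny nz)"
  unfolding Dmat_def by (rule hcat3_carrier[OF Dmat_blocks_carrier])

lemma sum_uminus_kron3_column:
  assumes "P \<in> carrier_mat c c'" "Q \<in> carrier_mat b b'" "R \<in> carrier_mat a a'"
    and "k < c'" "j < b'" "i < a'"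
  shows "(\<Sum>r<c*(b*a). (- kron P (kron Q R)) $$ (r, lin_index a' b' i j k) * f r)
       = - (\<Sum>k'<c. P$$(k',k) * (\<Sum>j'<b. Q$$(j',j) * (\<Sum>i'<a. R$$(i',i) * f (lin_index a b i' j' k'))))"
proof -
  have "kron P (kron Q R) \<in> carrier_mat (c*(b*a)) (c'*(b'*a'))"
    using assms by (intro kron_carrier)
  moreover have "lin_index a' b' i j k < c'*(b'*a')"
    using assms by (intro lin_index_less)
  ultimately show ?thesis
    unfolding sum_kron3_column[OF assms, symmetric] sum_negf[symmetric]
    by (intro sum.cong refl) auto
qed

lemma Dmat_column_x:
  assumes "i < nx" "j \<le> ny" "k \<le> nz"
  shows "(\<Sum>r<node_count nx ny nz. Dmat nx ny nz $$ (r, x_edge_index nx ny i j k) * y r)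
    = y (node_index nx ny i j k) - y (node_index nx ny (i+1) j k)"
proof -
  have i: "i < nx" and j: "j < ny+1" and k: "k < nz+1"
    using assms by auto
  have "lin_index nx (ny+1) i j k < x_edge_count nx ny nz"
    unfolding x_edge_count_def using i j k by (rule lin_index_less)
  then have "(\<Sum>r<node_count nx ny nz. Dmat nx ny nz $$ (r, x_edge_index nx ny i j k) * y r)
    = (\<Sum>r<node_count nx ny nz. (- kron (1\<^sub>m (nz+1)) (kron (1\<^sub>m (ny+1)) (transpose_mat (Wm nx))))
        $$ (r, lin_index nx (ny+1) i j k) * y r)"
    unfolding Dmat_def x_edge_index_def by (rule sum_hcat3_column(1)[OF Dmat_blocks_carrier])
  also have "\<dots> = - (\<Sum>k'<nz+1. 1\<^sub>m (nz+1) $$ (k',k) * (\<Sum>j'<ny+1. 1\<^sub>m (ny+1) $$ (j',j)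
      * (\<Sum>i'<nx+1. transpose_mat (Wm nx) $$ (i',i) * y (lin_index (nx+1) (ny+1) i' j' k'))))"
    unfolding node_count_def by (rule sum_uminus_kron3_column[OF one_carrier_mat one_carrier_mat transpose_Wm_carrier k j i])
  also have "\<dots> = y (node_index nx ny i j k) - y (node_index nx ny (i+1) j k)"
    unfolding sum_one_mat_column[OF k] sum_one_mat_column[OF j] sum_transpose_Wm_column[OF i] node_index_def
    by simp
  finally show ?thesis .
qed

lemma Dmat_column_y:
  assumes "i \<le> nx" "j < ny" "k \<le> nz"
  shows "(\<Sum>r<node_count nx ny nz. Dmat nx ny nz $$ (r, y_edge_index nx ny nz i j k) * y r)
    = y (node_index nx ny i j k) - y (node_index nx ny i (j+1) k)"
proof -
  have i: "i < nx+1" and j: "j < ny" and k: "k < nz+1"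
    using assms by auto
  have "lin_index (nx+1) ny i j k < y_edge_count nx ny nz"
    unfolding y_edge_count_def using i j k by (rule lin_index_less)
  then have "(\<Sum>r<node_count nx ny nz. Dmat nx ny nz $$ (r, y_edge_index nx ny nz i j k) * y r)
    = (\<Sum>r<node_count nx ny nz. (- kron (1\<^sub>m (nz+1)) (kron (transpose_mat (Wm ny)) (1\<^sub>m (nx+1))))
        $$ (r, lin_index (nx+1) ny i j k) * y r)"
    unfolding Dmat_def y_edge_index_def by (rule sum_hcat3_column(2)[OF Dmat_blocks_carrier])
  also have "\<dots> = - (\<Sum>k'<nz+1. 1\<^sub>m (nz+1) $$ (k',k) * (\<Sum>j'<ny+1. transpose_mat (Wm ny) $$ (j',j)
      * (\<Sum>i'<nx+1. 1\<^sub>m (nx+1) $$ (i',i) * y (lin_index (nx+1) (ny+1) i' j' k'))))"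
    unfolding node_count_def by (rule sum_uminus_kron3_column[OF one_carrier_mat transpose_Wm_carrier one_carrier_mat k j i])
  also have "\<dots> = y (node_index nx ny i j k) - y (node_index nx ny i (j+1) k)"
    unfolding sum_one_mat_column[OF k] sum_transpose_Wm_column[OF j] sum_one_mat_column[OF i] node_index_def
    by simp
  finally show ?thesis .
qed

lemma Dmat_column_z:
  assumes "i \<le> nx" "j \<le> ny" "k < nz"
  shows "(\<Sum>r<node_count nx ny nz. Dmat nx ny nz $$ (r, z_edge_index nx ny nz i j k) * y r)
    = y (node_index nx ny i j k) - y (node_index nx ny i j (k+1))"
proof -
  have i: "i < nx+1" and j: "j < ny+1" and k: "k < nz"
    using assms by auto
  have "lin_index (nx+1) (ny+1) i j k < z_edge_count nx ny nz"
    unfolding z_edge_count_def using i j k by (rule lin_index_less)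
  then have "(\<Sum>r<node_count nx ny nz. Dmat nx ny nz $$ (r, z_edge_index nx ny nz i j k) * y r)
    = (\<Sum>r<node_count nx ny nz. (- kron (transpose_mat (Wm nz)) (kron (1\<^sub>m (ny+1)) (1\<^sub>m (nx+1))))
        $$ (r, lin_index (nx+1) (ny+1) i j k) * y r)"
    unfolding Dmat_def z_edge_index_def by (rule sum_hcat3_column(3)[OF Dmat_blocks_carrier])
  also have "\<dots> = - (\<Sum>k'<nz+1. transpose_mat (Wm nz) $$ (k',k) * (\<Sum>j'<ny+1. 1\<^sub>m (ny+1) $$ (j',j)
      * (\<Sum>i'<nx+1. 1\<^sub>m (nx+1) $$ (i',i) * y (lin_index (nx+1) (ny+1) i' j' k'))))"
    unfolding node_count_def by (rule sum_uminus_kron3_column[OF transpose_Wm_carrier one_carrier_mat one_carrier_mat k j i])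
  also have "\<dots> = y (node_index nx ny i j k) - y (node_index nx ny i j (k+1))"
    unfolding sum_transpose_Wm_column[OF k] sum_one_mat_column[OF j] sum_one_mat_column[OF i] node_index_def
    by simp
  finally show ?thesis .
qed

lemma index_gram_plus_diag:
  assumes D: "D \<in> carrier_mat n e" and "i < n" "j < n"
  shows "(c \<cdot>\<^sub>m (D * diag_fn e g * transpose_mat D) + diag_fn n p) $$ (i,j)
    = c * (\<Sum>l<e. D$$(i,l) * g l * D$$(j,l)) + (if i = j then p i else 0)"
proof -
  have "(c \<cdot>\<^sub>m (D * diag_fn e g * transpose_mat D) + diag_fn n p) $$ (i,j)
      = c * (D * diag_fn e g * transpose_mat D) $$ (i,j) + (if i = j then p i else 0)"
    using assms by simp
  also have "(D * diag_fn e g * transpose_mat D) $$ (i,j) = (\<Sum>l<e. D$$(i,l) * g l * D$$(j,l))"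
    by (rule index_mult_diag_fn_transpose[OF assms])
  finally show ?thesis .
qed

lemma quadratic_form_gram_plus_diag:
  assumes D: "D \<in> carrier_mat n e" and y: "y \<in> carrier_vec n"
  shows "y \<bullet> ((c \<cdot>\<^sub>m (D * diag_fn e g * transpose_mat D) + diag_fn n p) *\<^sub>v y)
       = c * (\<Sum>l<e. g l * (\<Sum>r<n. D $$ (r,l) * y$r)^2) + (\<Sum>r<n. p r * (y$r)^2)"
proof -
  define M where "M = c \<cdot>\<^sub>m (D * diag_fn e g * transpose_mat D) + diag_fn n p"
  have M: "M \<in> carrier_mat n n"
    unfolding M_def using D by auto
  have M_index: "M $$ (i,j) = c * (\<Sum>l<e. D$$(i,l) * g l * D$$(j,l)) + (if i = j then p i else 0)"
    if "i < n" "j < n" for i j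
    unfolding M_def by (rule index_gram_plus_diag[OF D that])
  have "y \<bullet> (M *\<^sub>v y) = (\<Sum>i<n. \<Sum>j<n. y$i * M$$(i,j) * y$j)"
    by (rule quadratic_form_sum[OF M y])
  also have "\<dots> = (\<Sum>i<n. \<Sum>j<n. c * (\<Sum>l<e. (D$$(i,l) * y$i) * g l * (D$$(j,l) * y$j)))
      + (\<Sum>i<n. \<Sum>j<n. if i = j then p i * (y$i)^2 else 0)"
    unfolding sum.distrib[symmetric]
    by (intro sum.cong refl)
      (simp add: M_index algebra_simps sum_distrib_left sum_distrib_right power2_eq_square)
  also have "(\<Sum>i<n. \<Sum>j<n. if i = j then p i * (y$i)^2 else 0) = (\<Sum>r<n. p r * (y$r)^2)"
    by simp
  also have "(\<Sum>i<n. \<Sum>j<n. c * (\<Sum>l<e. (D$$(i,l) * y$i) * g l * (D$$(j,l) * y$j)))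
      = c * (\<Sum>l<e. \<Sum>i<n. \<Sum>j<n. (D$$(i,l) * y$i) * g l * (D$$(j,l) * y$j))"
    by (simp add: sum_distrib_left sum.swap[of _ "{..<e}"])
  also have "\<dots> = c * (\<Sum>l<e. g l * (\<Sum>r<n. D $$ (r,l) * y$r)^2)"
    by (simp add: power2_eq_square sum_distrib_left sum_distrib_right mult_ac)
  finally show ?thesis
    unfolding M_def .
qed

context
  fixes hbar m dx dy dz :: real
begin

definition kinetic_x :: "nat \<Rightarrow> nat \<Rightarrow> nat \<Rightarrow> (nat \<Rightarrow> nat \<Rightarrow> nat \<Rightarrow> real) \<Rightarrow> real" where
  "kinetic_x nx ny nz Y = trapezoid_sum nz (\<lambda>k. trapezoid_sum ny (\<lambda>j.
     \<Sum>i<nx. dy * dz / dx * (Y (i+1) j k - Y i j k)^2))"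

definition kinetic_y :: "nat \<Rightarrow> nat \<Rightarrow> nat \<Rightarrow> (nat \<Rightarrow> nat \<Rightarrow> nat \<Rightarrow> real) \<Rightarrow> real" where
  "kinetic_y nx ny nz Y = trapezoid_sum nz (\<lambda>k. \<Sum>j<ny.
     trapezoid_sum nx (\<lambda>i. dx * dz / dy * (Y i (j+1) k - Y i j k)^2))"

definition kinetic_z :: "nat \<Rightarrow> nat \<Rightarrow> nat \<Rightarrow> (nat \<Rightarrow> nat \<Rightarrow> nat \<Rightarrow> real) \<Rightarrow> real" where
  "kinetic_z nx ny nz Y = (\<Sum>k<nz. trapezoid_sum ny (\<lambda>j.
     trapezoid_sum nx (\<lambda>i. dx * dy / dz * (Y i j (k+1) - Y i j k)^2)))"

(* Grid functions are indexed from 0 at the nodes, whereas the potential U is indexed from 1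
   (as in DUm); hence the shift by one. *)
definition potential_energy :: "nat \<Rightarrow> nat \<Rightarrow> nat \<Rightarrow> (nat \<Rightarrow> nat \<Rightarrow> nat \<Rightarrow> real) \<Rightarrow> (nat \<Rightarrow> nat \<Rightarrow> nat \<Rightarrow> real) \<Rightarrow> real" where
  "potential_energy nx ny nz U Y = trapezoid_sum nz (\<lambda>k. trapezoid_sum ny (\<lambda>j.
     trapezoid_sum nx (\<lambda>i. dx * dy * dz * U (i+1) (j+1) (k+1) * (Y i j k)^2)))"

definition mass :: "nat \<Rightarrow> nat \<Rightarrow> nat \<Rightarrow> (nat \<Rightarrow> nat \<Rightarrow> nat \<Rightarrow> real) \<Rightarrow> real" where
  "mass nx ny nz Y = trapezoid_sum nz (\<lambda>k. trapezoid_sum ny (\<lambda>j.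
     trapezoid_sum nx (\<lambda>i. dx * dy * dz * (Y i j k)^2)))"

definition energy :: "nat \<Rightarrow> nat \<Rightarrow> nat \<Rightarrow> (nat \<Rightarrow> nat \<Rightarrow> nat \<Rightarrow> real) \<Rightarrow> (nat \<Rightarrow> nat \<Rightarrow> nat \<Rightarrow> real) \<Rightarrow> real" where
  "energy nx ny nz U Y = hbar^2 / (2*m) * (kinetic_x nx ny nz Y + kinetic_y nx ny nz Y + kinetic_z nx ny nz Y)
     + potential_energy nx ny nz U Y"

definition node_volume :: "nat \<Rightarrow> nat \<Rightarrow> nat \<Rightarrow> nat \<Rightarrow> nat \<Rightarrow> nat \<Rightarrow> real" where
  "node_volume nx ny nz i j k = dx * dy * dz *
     (trapezoid_weight (nz+1) k * (trapezoid_weight (ny+1) j * trapezoid_weight (nx+1) i))"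

definition volume_diag :: "nat \<Rightarrow> nat \<Rightarrow> nat \<Rightarrow> nat \<Rightarrow> real" where
  "volume_diag nx ny nz r = node_volume nx ny nz
     (r mod ((ny+1)*(nx+1)) mod (nx+1)) (r mod ((ny+1)*(nx+1)) div (nx+1)) (r div ((ny+1)*(nx+1)))"

definition potential_diag :: "nat \<Rightarrow> nat \<Rightarrow> (nat \<Rightarrow> nat \<Rightarrow> nat \<Rightarrow> real) \<Rightarrow> nat \<Rightarrow> real" where
  "potential_diag nx ny U r = U (r mod (nx+1) + 1) (r div (nx+1) mod (ny+1) + 1) (r div ((nx+1)*(ny+1)) + 1)"

definition edge_weight :: "nat \<Rightarrow> nat \<Rightarrow> nat \<Rightarrow> nat \<Rightarrow> real" where
  "edge_weight nx ny nz = join3 (x_edge_count nx ny nz) (y_edge_count nx ny nz)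
     (\<lambda>r. dy * dz / dx * (trapezoid_weight (nz+1) (r div ((ny+1)*nx)) * trapezoid_weight (ny+1) (r mod ((ny+1)*nx) div nx)))
     (\<lambda>r. dx * dz / dy * (trapezoid_weight (nz+1) (r div (ny*(nx+1))) * trapezoid_weight (nx+1) (r mod (ny*(nx+1)) mod (nx+1))))
     (\<lambda>r. dx * dy / dz * (trapezoid_weight (ny+1) (r mod ((ny+1)*(nx+1)) div (nx+1)) * trapezoid_weight (nx+1) (r mod ((ny+1)*(nx+1)) mod (nx+1))))"

lemma node_volume_pos: "dx > 0 \<Longrightarrow> dy > 0 \<Longrightarrow> dz > 0 \<Longrightarrow> node_volume nx ny nz i j k > 0"
  unfolding node_volume_def by (simp add: trapezoid_weight_pos)

lemma volume_diag_node:
  assumes "i \<le> nx" "j \<le> ny"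
  shows "volume_diag nx ny nz (node_index nx ny i j k) = node_volume nx ny nz i j k"
proof -
  have "i < nx+1" "j < ny+1"
    using assms by auto
  show ?thesis
    unfolding volume_diag_def node_index_def lin_index_div_mod[OF \<open>i < nx+1\<close> \<open>j < ny+1\<close>]
    by (rule refl)
qed

lemma potential_diag_node:
  assumes "i \<le> nx" "j \<le> ny"
  shows "potential_diag nx ny U (node_index nx ny i j k) = U (i+1) (j+1) (k+1)"
proof -
  have "i < nx+1" "j < ny+1"
    using assms by auto
  show ?thesis
    unfolding potential_diag_def node_index_def lin_index_div_mod[OF \<open>i < nx+1\<close> \<open>j < ny+1\<close>]
    by (rule refl)
qed

lemma edge_weight_x:
  assumes "i < nx" "j \<le> ny" "k \<le> nz"
  shows "edge_weight nx ny nz (x_edge_index nx ny i j k)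
    = dy * dz / dx * (trapezoid_weight (nz+1) k * trapezoid_weight (ny+1) j)"
proof -
  have j: "j < ny+1"
    using assms by simp
  have x: "x_edge_index nx ny i j k < x_edge_count nx ny nz"
    unfolding x_edge_index_def x_edge_count_def using assms by (intro lin_index_less) auto
  show ?thesis
    unfolding edge_weight_def join3_def if_P[OF x]
    unfolding x_edge_index_def lin_index_div_mod[OF assms(1) j] by (rule refl)
qed

lemma edge_weight_y:
  assumes "i \<le> nx" "j < ny" "k \<le> nz"
  shows "edge_weight nx ny nz (y_edge_index nx ny nz i j k)
    = dx * dz / dy * (trapezoid_weight (nz+1) k * trapezoid_weight (nx+1) i)"
proof -
  have i: "i < nx+1"
    using assms by simp
  have "lin_index (nx+1) ny i j k < y_edge_count nx ny nz"
    unfolding y_edge_count_def using assms by (intro lin_index_less) auto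
  then have not_x: "\<not> y_edge_index nx ny nz i j k < x_edge_count nx ny nz"
    and y: "y_edge_index nx ny nz i j k < x_edge_count nx ny nz + y_edge_count nx ny nz"
    unfolding y_edge_index_def by simp_all
  show ?thesis
    unfolding edge_weight_def join3_def if_not_P[OF not_x] if_P[OF y]
    unfolding y_edge_index_def add_diff_cancel_left' lin_index_div_mod[OF i assms(2)] by (rule refl)
qed

lemma edge_weight_z:
  assumes "i \<le> nx" "j \<le> ny" "k < nz"
  shows "edge_weight nx ny nz (z_edge_index nx ny nz i j k)
    = dx * dy / dz * (trapezoid_weight (ny+1) j * trapezoid_weight (nx+1) i)"
proof -
  have i: "i < nx+1" and j: "j < ny+1"
    using assms by simp_all
  have not_x: "\<not> z_edge_index nx ny nz i j k < x_edge_count nx ny nz"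
    and not_y: "\<not> z_edge_index nx ny nz i j k < x_edge_count nx ny nz + y_edge_count nx ny nz"
    unfolding z_edge_index_def by simp_all
  show ?thesis
    unfolding edge_weight_def join3_def if_not_P[OF not_x] if_not_P[OF not_y]
    unfolding z_edge_index_def diff_diff_left add_diff_cancel_left' lin_index_div_mod[OF i j] by (rule refl)
qed

lemma DV_diag_fn: "DV dx dy dz nx ny nz = diag_fn (node_count nx ny nz) (volume_diag nx ny nz)"
  unfolding DV_def Itil_diag_fn kron_diag_fn smult_diag_fn volume_diag_def node_volume_def node_count_def
  by simp

lemma DS_diag_fn: "DS dx dy dz nx ny nz = diag_fn (edge_count nx ny nz) (join3 (x_edge_count nx ny nz) (y_edge_count nx ny nz)
      (\<lambda>r. dy * dz * (trapezoid_weight (nz+1) (r div ((ny+1)*nx)) * (trapezoid_weight (ny+1) (r mod ((ny+1)*nx) div nx) * 1)))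
      (\<lambda>r. dx * dz * (trapezoid_weight (nz+1) (r div (ny*(nx+1))) * (1 * trapezoid_weight (nx+1) (r mod (ny*(nx+1)) mod (nx+1)))))
      (\<lambda>r. dx * dy * (1 * (trapezoid_weight (ny+1) (r mod ((ny+1)*(nx+1)) div (nx+1)) * trapezoid_weight (nx+1) (r mod ((ny+1)*(nx+1)) mod (nx+1))))))"
proof -
  have counts: "(nz+1) * ((ny+1) * nx) = x_edge_count nx ny nz" "(nz+1) * (ny * (nx+1)) = y_edge_count nx ny nz"
    "nz * ((ny+1) * (nx+1)) = z_edge_count nx ny nz"
    unfolding x_edge_count_def y_edge_count_def z_edge_count_def by simp_all
  show ?thesis
    unfolding DS_def Itil_diag_fn one_diag_fn kron_diag_fn smult_diag_fn counts bdiag3_diag_fn ..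
qed

lemma Dl_inv_diag_fn: "Dl_inv dx dy dz nx ny nz = diag_fn (edge_count nx ny nz)
    (join3 (x_edge_count nx ny nz) (y_edge_count nx ny nz) (\<lambda>_. 1/dx * 1) (\<lambda>_. 1/dy * 1) (\<lambda>_. 1/dz * 1))"
proof -
  have counts: "nx*(ny+1)*(nz+1) = x_edge_count nx ny nz" "(nx+1)*ny*(nz+1) = y_edge_count nx ny nz"
    "(nx+1)*(ny+1)*nz = z_edge_count nx ny nz"
    unfolding x_edge_count_def y_edge_count_def z_edge_count_def by (simp_all only: ac_simps)
  show ?thesis
    unfolding Dl_inv_def counts one_diag_fn smult_diag_fn bdiag3_diag_fn ..
qed

lemma Hmat_eq:
  "Hmat hbar m dx dy dz nx ny nz U = (hbar^2 / (2*m)) \<cdot>\<^sub>m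
     (Dmat nx ny nz * diag_fn (edge_count nx ny nz) (edge_weight nx ny nz) * transpose_mat (Dmat nx ny nz))
     + diag_fn (node_count nx ny nz) (\<lambda>r. volume_diag nx ny nz r * potential_diag nx ny U r)"
proof -
  have DS_Dl: "DS dx dy dz nx ny nz * Dl_inv dx dy dz nx ny nz = diag_fn (edge_count nx ny nz) (edge_weight nx ny nz)"
    unfolding DS_diag_fn Dl_inv_diag_fn diag_fn_mult edge_weight_def
    by (rule arg_cong[where f="diag_fn _"]) (auto simp: join3_def fun_eq_iff)
  have assoc: "Dmat nx ny nz * DS dx dy dz nx ny nz * Dl_inv dx dy dz nx ny nz
      = Dmat nx ny nz * diag_fn (edge_count nx ny nz) (edge_weight nx ny nz)"
    unfolding DS_Dl[symmetric] DS_diag_fn Dl_inv_diag_fn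
    by (rule assoc_mult_mat[OF Dmat_carrier diag_fn_carrier diag_fn_carrier])
  have DU: "DUm nx ny nz U = diag_fn (node_count nx ny nz) (potential_diag nx ny U)"
  proof -
    have N: "(nx+1)*(ny+1)*(nz+1) = node_count nx ny nz"
      unfolding node_count_def by (simp only: ac_simps)
    show ?thesis
      unfolding DUm_def Let_def N diag_fn_def potential_diag_def by simp
  qed
  show ?thesis
    unfolding Hmat_def assoc DV_diag_fn DU diag_fn_mult by (rule refl)
qed

lemma Hmat_carrier: "Hmat hbar m dx dy dz nx ny nz U \<in> carrier_mat (node_count nx ny nz) (node_count nx ny nz)"
  unfolding Hmat_eq using Dmat_carrier by (intro add_carrier_mat smult_carrier_mat mult_carrier_mat) auto

lemma Hmat_symmetric_index:
  assumes "i < node_count nx ny nz" "j < node_count nx ny nz"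
  shows "Hmat hbar m dx dy dz nx ny nz U $$ (i,j) = Hmat hbar m dx dy dz nx ny nz U $$ (j,i)"
  unfolding Hmat_eq index_gram_plus_diag[OF Dmat_carrier assms] index_gram_plus_diag[OF Dmat_carrier assms(2,1)]
  by (auto simp: mult_ac)

lemma hamiltonian_quadratic_form:
  assumes y: "y \<in> carrier_vec (node_count nx ny nz)"
    and Y: "\<And>i j k. i \<le> nx \<Longrightarrow> j \<le> ny \<Longrightarrow> k \<le> nz \<Longrightarrow> y $ node_index nx ny i j k = Y i j k"
  shows "y \<bullet> (Hmat hbar m dx dy dz nx ny nz U *\<^sub>v y) = energy nx ny nz U Y"
proof -
  define T where "T e = edge_weight nx ny nz e * (\<Sum>r<node_count nx ny nz. Dmat nx ny nz $$ (r,e) * y$r)^2" for e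
  have Tx: "T (x_edge_index nx ny i j k) = trapezoid_weight (nz+1) k * (trapezoid_weight (ny+1) j
      * (dy * dz / dx * (Y (i+1) j k - Y i j k)^2))" if "i < nx" "j \<le> ny" "k \<le> nz" for i j k
    unfolding T_def edge_weight_x[OF that] Dmat_column_x[OF that] using that
    by (simp add: Y power2_commute mult_ac)
  have Ty: "T (y_edge_index nx ny nz i j k) = trapezoid_weight (nz+1) k * (trapezoid_weight (nx+1) i
      * (dx * dz / dy * (Y i (j+1) k - Y i j k)^2))" if "i \<le> nx" "j < ny" "k \<le> nz" for i j k
    unfolding T_def edge_weight_y[OF that] Dmat_column_y[OF that] using that
    by (simp add: Y power2_commute mult_ac)
  have Tz: "T (z_edge_index nx ny nz i j k) = trapezoid_weight (ny+1) j * (trapezoid_weight (nx+1) i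
      * (dx * dy / dz * (Y i j (k+1) - Y i j k)^2))" if "i \<le> nx" "j \<le> ny" "k < nz" for i j k
    unfolding T_def edge_weight_z[OF that] Dmat_column_z[OF that] using that
    by (simp add: Y power2_commute mult_ac)
  have "y \<bullet> (Hmat hbar m dx dy dz nx ny nz U *\<^sub>v y) = hbar^2 / (2*m) *
      ((\<Sum>k<nz+1. \<Sum>j<ny+1. \<Sum>i<nx. T (x_edge_index nx ny i j k))
       + (\<Sum>k<nz+1. \<Sum>j<ny. \<Sum>i<nx+1. T (y_edge_index nx ny nz i j k))
       + (\<Sum>k<nz. \<Sum>j<ny+1. \<Sum>i<nx+1. T (z_edge_index nx ny nz i j k)))
      + (\<Sum>k<nz+1. \<Sum>j<ny+1. \<Sum>i<nx+1. (\<lambda>r. volume_diag nx ny nz r * potential_diag nx ny U r * (y$r)^2)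
          (node_index nx ny i j k))"
    unfolding Hmat_eq quadratic_form_gram_plus_diag[OF Dmat_carrier y] T_def sum_edge_index sum_node_index ..
  also have "(\<Sum>k<nz+1. \<Sum>j<ny+1. \<Sum>i<nx. T (x_edge_index nx ny i j k)) = kinetic_x nx ny nz Y"
    unfolding kinetic_x_def trapezoid_sum_def sum_distrib_left
    by (intro sum.cong refl) (simp add: Tx)
  also have "(\<Sum>k<nz+1. \<Sum>j<ny. \<Sum>i<nx+1. T (y_edge_index nx ny nz i j k)) = kinetic_y nx ny nz Y"
    unfolding kinetic_y_def trapezoid_sum_def sum_distrib_left
    by (intro sum.cong refl) (simp add: Ty)
  also have "(\<Sum>k<nz. \<Sum>j<ny+1. \<Sum>i<nx+1. T (z_edge_index nx ny nz i j k)) = kinetic_z nx ny nz Y"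
    unfolding kinetic_z_def trapezoid_sum_def sum_distrib_left
    by (intro sum.cong refl) (simp add: Tz)
  also have "(\<Sum>k<nz+1. \<Sum>j<ny+1. \<Sum>i<nx+1. (\<lambda>r. volume_diag nx ny nz r * potential_diag nx ny U r * (y$r)^2)
          (node_index nx ny i j k)) = potential_energy nx ny nz U Y"
    unfolding potential_energy_def trapezoid_sum_triple[symmetric]
    by (intro sum.cong refl) (simp add: volume_diag_node potential_diag_node Y node_volume_def mult_ac)
  finally show ?thesis
    unfolding energy_def .
qed

definition scaled_hamiltonian :: "nat \<Rightarrow> nat \<Rightarrow> nat \<Rightarrow> (nat \<Rightarrow> nat \<Rightarrow> nat \<Rightarrow> real) \<Rightarrow> real mat" where
  "scaled_hamiltonian nx ny nz U = (1/hbar) \<cdot>\<^sub>m (diag_inv_sqrt (DV dx dy dz nx ny nz)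
     * Hmat hbar m dx dy dz nx ny nz U * diag_inv_sqrt (DV dx dy dz nx ny nz))"

lemma cfl_gen_eq: "cfl_gen hbar m dx dy dz nx ny nz U
    = 2 / spectral_radius (map_mat complex_of_real (scaled_hamiltonian nx ny nz U))"
  unfolding cfl_gen_def scaled_hamiltonian_def ..

lemma scaled_hamiltonian_carrier:
  "scaled_hamiltonian nx ny nz U \<in> carrier_mat (node_count nx ny nz) (node_count nx ny nz)"
  unfolding scaled_hamiltonian_def DV_diag_fn diag_inv_sqrt_diag_fn
  by (rule smult_carrier_mat, rule mult_carrier_mat[OF mult_carrier_mat[OF diag_fn_carrier Hmat_carrier] diag_fn_carrier])

lemma index_scaled_hamiltonian:
  assumes "i < node_count nx ny nz" "j < node_count nx ny nz"
  shows "scaled_hamiltonian nx ny nz U $$ (i,j) = Hmat hbar m dx dy dz nx ny nz U $$ (i,j)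
    / (hbar * sqrt (volume_diag nx ny nz i) * sqrt (volume_diag nx ny nz j))"
proof -
  let ?S = "diag_fn (node_count nx ny nz) (\<lambda>r. 1 / sqrt (volume_diag nx ny nz r))"
  let ?H = "Hmat hbar m dx dy dz nx ny nz U"
  have SH: "?S * ?H \<in> carrier_mat (node_count nx ny nz) (node_count nx ny nz)"
    by (rule mult_carrier_mat[OF diag_fn_carrier Hmat_carrier])
  have "(?S * ?H * ?S) $$ (i,j) = (1 / sqrt (volume_diag nx ny nz i)) * ?H $$ (i,j) * (1 / sqrt (volume_diag nx ny nz j))"
    unfolding index_mult_diag_fn[OF SH assms] index_diag_fn_mult[OF Hmat_carrier assms] ..
  then show ?thesis
    unfolding scaled_hamiltonian_def DV_diag_fn diag_inv_sqrt_diag_fn using assms SH by simp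
qed

lemma scaled_hamiltonian_symmetric: "transpose_mat (scaled_hamiltonian nx ny nz U) = scaled_hamiltonian nx ny nz U"
proof (rule eq_matI)
  note dims = carrier_matD[OF scaled_hamiltonian_carrier[of nx ny nz U]]
  fix i j
  assume "i < dim_row (scaled_hamiltonian nx ny nz U)" "j < dim_col (scaled_hamiltonian nx ny nz U)"
  then have ij: "i < node_count nx ny nz" "j < node_count nx ny nz"
    using dims by simp_all
  then show "transpose_mat (scaled_hamiltonian nx ny nz U) $$ (i,j) = scaled_hamiltonian nx ny nz U $$ (i,j)"
    using dims by (simp add: index_scaled_hamiltonian Hmat_symmetric_index[OF ij] mult_ac)
qed (simp_all add: carrier_matD[OF scaled_hamiltonian_carrier])

lemma scaled_hamiltonian_quadratic_form:
  assumes d: "dx > 0" "dy > 0" "dz > 0"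
    and x: "x \<in> carrier_vec (node_count nx ny nz)"
    and Y: "\<And>i j k. i \<le> nx \<Longrightarrow> j \<le> ny \<Longrightarrow> k \<le> nz \<Longrightarrow>
      x $ node_index nx ny i j k = sqrt (node_volume nx ny nz i j k) * Y i j k"
  shows "x \<bullet> (scaled_hamiltonian nx ny nz U *\<^sub>v x) = energy nx ny nz U Y / hbar"
    and "x \<bullet> x = mass nx ny nz Y"
proof -
  define y where "y = vec (node_count nx ny nz) (\<lambda>r. x$r / sqrt (volume_diag nx ny nz r))"
  have y: "y \<in> carrier_vec (node_count nx ny nz)"
    unfolding y_def by simp
  have vol: "sqrt (node_volume nx ny nz i j k) > 0" for i j k
    using node_volume_pos[OF d] by simp
  have "y $ node_index nx ny i j k = Y i j k" if "i \<le> nx" "j \<le> ny" "k \<le> nz" for i j k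
    using that node_index_less[OF that] vol[of i j k]
    by (simp add: y_def volume_diag_node Y)
  then have "y \<bullet> (Hmat hbar m dx dy dz nx ny nz U *\<^sub>v y) = energy nx ny nz U Y"
    by (rule hamiltonian_quadratic_form[OF y])
  moreover have "x \<bullet> (scaled_hamiltonian nx ny nz U *\<^sub>v x)
      = y \<bullet> (Hmat hbar m dx dy dz nx ny nz U *\<^sub>v y) / hbar"
    unfolding quadratic_form_sum[OF scaled_hamiltonian_carrier x] quadratic_form_sum[OF Hmat_carrier y]
      sum_divide_distrib
    by (intro sum.cong refl) (simp add: index_scaled_hamiltonian y_def)
  ultimately show "x \<bullet> (scaled_hamiltonian nx ny nz U *\<^sub>v x) = energy nx ny nz U Y / hbar"
    by simp
  have "(x $ node_index nx ny i j k)^2 = trapezoid_weight (nz+1) k * (trapezoid_weight (ny+1) j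
      * trapezoid_weight (nx+1) i) * (dx * dy * dz * (Y i j k)^2)" if "i \<le> nx" "j \<le> ny" "k \<le> nz" for i j k
  proof -
    have "(x $ node_index nx ny i j k)^2 = node_volume nx ny nz i j k * (Y i j k)^2"
      using Y[OF that] node_volume_pos[OF d, of nx ny nz i j k] by (simp add: power_mult_distrib)
    then show ?thesis
      by (simp add: node_volume_def mult_ac)
  qed
  then have "(\<Sum>r<node_count nx ny nz. (x$r)^2) = mass nx ny nz Y"
    unfolding mass_def trapezoid_sum_triple[symmetric] sum_node_index
    by (intro sum.cong refl) simp
  moreover have "x \<bullet> x = (\<Sum>r<node_count nx ny nz. (x$r)^2)"
    using scalar_prod_sum[OF x] by (simp add: power2_eq_square)
  ultimately show "x \<bullet> x = mass nx ny nz Y"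
    by simp
qed

definition grid_vector :: "nat \<Rightarrow> nat \<Rightarrow> nat \<Rightarrow> (nat \<Rightarrow> nat \<Rightarrow> nat \<Rightarrow> real) \<Rightarrow> real vec" where
  "grid_vector nx ny nz Y = vec (node_count nx ny nz) (\<lambda>r. sqrt (volume_diag nx ny nz r)
     * Y (r mod (nx+1)) (r div (nx+1) mod (ny+1)) (r div ((nx+1)*(ny+1))))"

lemma grid_vector_carrier: "grid_vector nx ny nz Y \<in> carrier_vec (node_count nx ny nz)"
  unfolding grid_vector_def by simp

lemma grid_vector_node:
  assumes "i \<le> nx" "j \<le> ny" "k \<le> nz"
  shows "grid_vector nx ny nz Y $ node_index nx ny i j k = sqrt (node_volume nx ny nz i j k) * Y i j k"
proof -
  have i: "i < nx+1" and j: "j < ny+1"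
    using assms by simp_all
  have "grid_vector nx ny nz Y $ node_index nx ny i j k = sqrt (volume_diag nx ny nz (node_index nx ny i j k))
    * Y (node_index nx ny i j k mod (nx+1)) (node_index nx ny i j k div (nx+1) mod (ny+1))
        (node_index nx ny i j k div ((nx+1)*(ny+1)))"
    unfolding grid_vector_def using node_index_less[OF assms] by simp
  also have "\<dots> = sqrt (node_volume nx ny nz i j k) * Y i j k"
    unfolding volume_diag_node[OF assms(1,2)] unfolding node_index_def lin_index_div_mod[OF i j] by (rule refl)
  finally show ?thesis .
qed

lemma abs_energy_le_spectral_radius:
  assumes "hbar > 0" "dx > 0" "dy > 0" "dz > 0"
  shows "\<bar>energy nx ny nz U Y\<bar> / hbar
    \<le> spectral_radius (map_mat complex_of_real (scaled_hamiltonian nx ny nz U)) * mass nx ny nz Y"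
  using abs_quadratic_form_le_spectral_radius[OF scaled_hamiltonian_carrier scaled_hamiltonian_symmetric
      grid_vector_carrier]
    scaled_hamiltonian_quadratic_form[OF assms(2-4) grid_vector_carrier grid_vector_node] assms(1)
  by (simp add: abs_div)

lemma spectral_radius_attained_by_energies:
  assumes "dx > 0" "dy > 0" "dz > 0"
  obtains Ya Yb where "mass nx ny nz Ya + mass nx ny nz Yb > 0"
    "spectral_radius (map_mat complex_of_real (scaled_hamiltonian nx ny nz U)) * (mass nx ny nz Ya + mass nx ny nz Yb)
      = \<bar>energy nx ny nz U Ya / hbar + energy nx ny nz U Yb / hbar\<bar>"
proof -
  obtain a b where ab: "a \<in> carrier_vec (node_count nx ny nz)" "b \<in> carrier_vec (node_count nx ny nz)"
    "a \<bullet> a + b \<bullet> b > 0"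
    "spectral_radius (map_mat complex_of_real (scaled_hamiltonian nx ny nz U)) * (a \<bullet> a + b \<bullet> b)
      = \<bar>a \<bullet> (scaled_hamiltonian nx ny nz U *\<^sub>v a) + b \<bullet> (scaled_hamiltonian nx ny nz U *\<^sub>v b)\<bar>"
    by (rule spectral_radius_real_symmetric_attained[OF scaled_hamiltonian_carrier scaled_hamiltonian_symmetric
          node_count_pos])
  define grid where "grid v i j k = v $ node_index nx ny i j k / sqrt (node_volume nx ny nz i j k)" for v i j k
  have repr: "v $ node_index nx ny i j k = sqrt (node_volume nx ny nz i j k) * grid v i j k" for v i j k
    unfolding grid_def using node_volume_pos[OF assms, of nx ny nz i j k] by simp
  have "a \<bullet> (scaled_hamiltonian nx ny nz U *\<^sub>v a) = energy nx ny nz U (grid a) / hbar"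
    "b \<bullet> (scaled_hamiltonian nx ny nz U *\<^sub>v b) = energy nx ny nz U (grid b) / hbar"
    "a \<bullet> a = mass nx ny nz (grid a)" "b \<bullet> b = mass nx ny nz (grid b)"
    by (rule scaled_hamiltonian_quadratic_form[OF assms ab(1)] scaled_hamiltonian_quadratic_form[OF assms ab(2)],
        rule repr)+
  then show ?thesis
    using that[of "grid a" "grid b"] ab by simp
qed

(* If rho vanished, so would every energy; but the grid function (-1)^i has the same potential
   energy as the constant one and strictly larger kinetic energy. *)
lemma spectral_radius_scaled_hamiltonian_pos:
  assumes "hbar > 0" "m > 0" "dx > 0" "dy > 0" "dz > 0" "nx \<ge> 1"
  shows "spectral_radius (map_mat complex_of_real (scaled_hamiltonian nx ny nz U)) > 0"
proof -
  let ?rho = "spectral_radius (map_mat complex_of_real (scaled_hamiltonian nx ny nz U))"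
  have "?rho \<ge> 0"
    using scaled_hamiltonian_carrier node_count_pos by (intro spectral_radius_nonneg) auto
  moreover have "?rho \<noteq> 0"
  proof
    assume "?rho = 0"
    have zero: "energy nx ny nz U Y = 0" for Y
    proof -
      have "\<bar>energy nx ny nz U Y\<bar> / hbar \<le> 0"
        using abs_energy_le_spectral_radius[OF assms(1,3-5), of nx ny nz U Y] \<open>?rho = 0\<close> by simp
      then show ?thesis
        using assms(1) by (simp add: divide_le_0_iff)
    qed
    define Y1 where "Y1 = (\<lambda>(i::nat) (j::nat) (k::nat). (1::real))"
    define Y2 where "Y2 = (\<lambda>(i::nat) (j::nat) (k::nat). (-1::real)^i)"
    have sign_sq: "((-1::real)^i)^2 = 1" for i :: nat
      by (induction i) auto
    have "kinetic_x nx ny nz Y1 = 0" "kinetic_y nx ny nz Y1 = 0" "kinetic_z nx ny nz Y1 = 0"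
      "kinetic_y nx ny nz Y2 = 0" "kinetic_z nx ny nz Y2 = 0"
      unfolding kinetic_x_def kinetic_y_def kinetic_z_def trapezoid_sum_def Y1_def Y2_def by simp_all
    moreover have "potential_energy nx ny nz U Y2 = potential_energy nx ny nz U Y1"
      unfolding potential_energy_def Y1_def Y2_def by (simp add: sign_sq)
    ultimately have "energy nx ny nz U Y2 - energy nx ny nz U Y1 = hbar^2 / (2*m) * kinetic_x nx ny nz Y2"
      unfolding energy_def by simp
    moreover have "kinetic_x nx ny nz Y2 > 0"
      unfolding kinetic_x_def Y2_def using assms
      by (intro trapezoid_sum_pos sum_pos) (auto simp: lessThan_empty_iff power2_eq_square)
    ultimately show False
      using zero assms by simp
  qed
  ultimately show ?thesis
    by simp
qed

lemma mass_nonneg: "dx > 0 \<Longrightarrow> dy > 0 \<Longrightarrow> dz > 0 \<Longrightarrow> mass nx ny nz Y \<ge> 0"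
  unfolding mass_def by (intro trapezoid_sum_nonneg) simp

section \<open>Splitting into single cells\<close>

lemma kinetic_x_cells:
  assumes "ny \<ge> 1" "nz \<ge> 1"
  shows "kinetic_x nx ny nz Y = (\<Sum>k<nz. \<Sum>j<ny. \<Sum>i<nx. kinetic_x 1 1 1 (shift_grid i j k Y))"
  unfolding kinetic_x_def shift_grid_def trapezoid_sum_cells[OF assms(2)] trapezoid_sum_cells[OF assms(1)]
  by (simp add: trapezoid_sum_sum)

lemma kinetic_y_cells:
  assumes "nx \<ge> 1" "nz \<ge> 1"
  shows "kinetic_y nx ny nz Y = (\<Sum>k<nz. \<Sum>j<ny. \<Sum>i<nx. kinetic_y 1 1 1 (shift_grid i j k Y))"
  unfolding kinetic_y_def shift_grid_def trapezoid_sum_cells[OF assms(2)] trapezoid_sum_cells[OF assms(1)]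
  by (simp add: trapezoid_sum_sum)

lemma kinetic_z_cells:
  assumes "nx \<ge> 1" "ny \<ge> 1"
  shows "kinetic_z nx ny nz Y = (\<Sum>k<nz. \<Sum>j<ny. \<Sum>i<nx. kinetic_z 1 1 1 (shift_grid i j k Y))"
  unfolding kinetic_z_def shift_grid_def trapezoid_sum_cells[OF assms(2)] trapezoid_sum_cells[OF assms(1)]
  by (simp add: trapezoid_sum_sum)

lemma potential_energy_cells:
  assumes "nx \<ge> 1" "ny \<ge> 1" "nz \<ge> 1"
  shows "potential_energy nx ny nz U Y
    = (\<Sum>k<nz. \<Sum>j<ny. \<Sum>i<nx. potential_energy 1 1 1 (shift_grid i j k U) (shift_grid i j k Y))"
  unfolding potential_energy_def shift_grid_def
    trapezoid_sum_cells[OF assms(3)] trapezoid_sum_cells[OF assms(2)] trapezoid_sum_cells[OF assms(1)]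
  by (simp add: trapezoid_sum_sum)

lemma mass_cells:
  assumes "nx \<ge> 1" "ny \<ge> 1" "nz \<ge> 1"
  shows "mass nx ny nz Y = (\<Sum>k<nz. \<Sum>j<ny. \<Sum>i<nx. mass 1 1 1 (shift_grid i j k Y))"
  unfolding mass_def shift_grid_def
    trapezoid_sum_cells[OF assms(3)] trapezoid_sum_cells[OF assms(2)] trapezoid_sum_cells[OF assms(1)]
  by (simp add: trapezoid_sum_sum)

lemma energy_cells:
  assumes "nx \<ge> 1" "ny \<ge> 1" "nz \<ge> 1"
  shows "energy nx ny nz U Y
    = (\<Sum>k<nz. \<Sum>j<ny. \<Sum>i<nx. energy 1 1 1 (shift_grid i j k U) (shift_grid i j k Y))"
  unfolding energy_def kinetic_x_cells[OF assms(2,3)] kinetic_y_cells[OF assms(1,3)]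
    kinetic_z_cells[OF assms(1,2)] potential_energy_cells[OF assms]
  by (simp only: sum.distrib[symmetric] sum_distrib_left)

lemma spectral_radius_le_cell:
  assumes "hbar > 0" "dx > 0" "dy > 0" "dz > 0" "nx \<ge> 1" "ny \<ge> 1" "nz \<ge> 1"
  obtains i j k where "i < nx" "j < ny" "k < nz"
    "spectral_radius (map_mat complex_of_real (scaled_hamiltonian nx ny nz U))
      \<le> spectral_radius (map_mat complex_of_real (scaled_hamiltonian 1 1 1 (shift_grid i j k U)))"
proof -
  obtain Ya Yb where pos: "mass nx ny nz Ya + mass nx ny nz Yb > 0" and rho:
    "spectral_radius (map_mat complex_of_real (scaled_hamiltonian nx ny nz U)) * (mass nx ny nz Ya + mass nx ny nz Yb)
      = \<bar>energy nx ny nz U Ya / hbar + energy nx ny nz U Yb / hbar\<bar>"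
    by (rule spectral_radius_attained_by_energies[OF assms(2-4)])
  define M where "M = (\<lambda>(k,j,i). mass 1 1 1 (shift_grid i j k Ya) + mass 1 1 1 (shift_grid i j k Yb))"
  define E where "E = (\<lambda>(k,j,i). energy 1 1 1 (shift_grid i j k U) (shift_grid i j k Ya) / hbar
    + energy 1 1 1 (shift_grid i j k U) (shift_grid i j k Yb) / hbar)"
  define r where "r = (\<lambda>(k,j,i).
    spectral_radius (map_mat complex_of_real (scaled_hamiltonian 1 1 1 (shift_grid i j k U))))"
  let ?cells = "{..<nz} \<times> {..<ny} \<times> {..<nx}"
  have sum_cells: "(\<Sum>c\<in>?cells. f c) = (\<Sum>k<nz. \<Sum>j<ny. \<Sum>i<nx. f (k,j,i))" for f :: "_ \<Rightarrow> real"
    by (simp add: sum.cartesian_product')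
  have sum_M: "(\<Sum>c\<in>?cells. M c) = mass nx ny nz Ya + mass nx ny nz Yb"
    unfolding sum_cells M_def mass_cells[OF assms(5-7)] by (simp add: sum.distrib)
  have sum_E: "(\<Sum>c\<in>?cells. E c) = energy nx ny nz U Ya / hbar + energy nx ny nz U Yb / hbar"
    unfolding sum_cells E_def energy_cells[OF assms(5-7)] by (simp add: sum.distrib sum_divide_distrib)
  have "M c \<ge> 0 \<and> \<bar>E c\<bar> \<le> r c * M c" for c
  proof -
    obtain k j i where c: "c = (k,j,i)"
      by (rule prod_cases3)
    let ?a = "energy 1 1 1 (shift_grid i j k U) (shift_grid i j k Ya)"
    let ?b = "energy 1 1 1 (shift_grid i j k U) (shift_grid i j k Yb)"
    have "\<bar>E c\<bar> \<le> \<bar>?a\<bar> / hbar + \<bar>?b\<bar> / hbar"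
      unfolding E_def c prod.case using abs_triangle_ineq[of "?a / hbar" "?b / hbar"] assms(1)
      by (simp add: abs_div)
    also have "\<dots> \<le> r c * M c"
      unfolding r_def M_def c prod.case distrib_left
      by (intro add_mono abs_energy_le_spectral_radius[OF assms(1-4)])
    finally show ?thesis
      unfolding M_def c prod.case using mass_nonneg[OF assms(2-4)] by (simp add: add_nonneg_nonneg)
  qed
  then have "\<exists>c\<in>?cells. spectral_radius (map_mat complex_of_real (scaled_hamiltonian nx ny nz U)) \<le> r c"
    using pos rho by (intro ex_bound_ge_of_weighted_sums[where M=M and e=E]) (auto simp: sum_M sum_E)
  then obtain c where "c \<in> ?cells"
    "spectral_radius (map_mat complex_of_real (scaled_hamiltonian nx ny nz U)) \<le> r c"
    by blast
  moreover obtain k j i where "c = (k,j,i)"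
    by (rule prod_cases3)
  ultimately show ?thesis
    using that[of i j k] unfolding r_def by simp
qed

end

theorem lemma5:
  fixes hbar m dx dy dz :: real and nx ny nz :: nat and U :: "nat \<Rightarrow> nat \<Rightarrow> nat \<Rightarrow> real"
  assumes "hbar > 0" "m > 0" "dx > 0" "dy > 0" "dz > 0"
    and "nx \<ge> 1" "ny \<ge> 1" "nz \<ge> 1"
  shows "Min {cfl_gen hbar m dx dy dz 1 1 1 (\<lambda>a b c. U (i + a - 1) (j + b - 1) (k + c - 1)) | i j k.
               i \<in> {1..nx} \<and> j \<in> {1..ny} \<and> k \<in> {1..nz}}
         \<le> cfl_gen hbar m dx dy dz nx ny nz U"
proof -
  obtain i j k where ijk: "i < nx" "j < ny" "k < nz" and le:
    "spectral_radius (map_mat complex_of_real (scaled_hamiltonian hbar m dx dy dz nx ny nz U))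
      \<le> spectral_radius (map_mat complex_of_real (scaled_hamiltonian hbar m dx dy dz 1 1 1 (shift_grid i j k U)))"
    by (rule spectral_radius_le_cell[OF assms(1,3-8)])
  have cell: "cfl_gen hbar m dx dy dz 1 1 1 (shift_grid i j k U)
      \<in> {cfl_gen hbar m dx dy dz 1 1 1 (\<lambda>a b c. U (i + a - 1) (j + b - 1) (k + c - 1)) | i j k.
          i \<in> {1..nx} \<and> j \<in> {1..ny} \<and> k \<in> {1..nz}}"
    using ijk unfolding shift_grid_def
    by (intro CollectI exI[of _ "Suc i"] exI[of _ "Suc j"] exI[of _ "Suc k"]) auto
  have "Min {cfl_gen hbar m dx dy dz 1 1 1 (\<lambda>a b c. U (i + a - 1) (j + b - 1) (k + c - 1)) | i j k.
      i \<in> {1..nx} \<and> j \<in> {1..ny} \<and> k \<in> {1..nz}} \<le> cfl_gen hbar m dx dy dz 1 1 1 (shift_grid i j k U)"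
    by (rule Min_le[OF finite_image_set3 cell]) simp_all
  also have "\<dots> \<le> cfl_gen hbar m dx dy dz nx ny nz U"
    unfolding cfl_gen_eq using le spectral_radius_scaled_hamiltonian_pos[OF assms(1-6), of ny nz U]
    by (intro divide_left_mono mult_pos_pos) auto
  finally show ?thesis .
qed

end
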